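(* Suppose (A1) each $f_t(\cdot)=f(\cdot;\boldsymbol\xi_t)$ has $L_g$-Lipschitz continuous gradient and (A2) $\|\nabla f_t(\mathbf x)\|_\infty\le\eta$ for all $\mathbf x$. Run ZO-AdaMM on a closed convex set $\mathcal X$ with $\hat{\mathbf v}_0^{1/2}\ge c\mathbf 1$ ($c>0$), $\alpha_t=\alpha\le c/L_g$, $\mu=1/\sqrt{Td}$ and $\beta_{1,t}=0$, and assume $f_\mu(\mathbf x_1)-\min_{\mathbf x}f_\mu(\mathbf x)\le D_f$. Let $\mathbf x_R$ be picked uniformly at random from $\{\mathbf x_t\}_{t=1}^T$. Then \[ \mathbb E[\|\mathcal G(\mathbf x_R)\|^2]\le\frac{6D_f}{\alpha T}+\frac{3L_g^2d}{4cT}+\frac{6\eta^2}{c^4T}\Big(\max_{t\in[T]}\mathbb E[\|\hat{\mathbf g}_t-\nabla f_\mu(\mathbf x_t)\|^2]+d\eta^2\Big)+\frac{3c+9}{c}\max_{t\in[T]}\mathbb E[\|\hat{\mathbf g}_t-\nabla f_\mu(\mathbf x_t)\|^2]. \]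
   Context: Problem: $\min_{\mathbf x\in\mathcal X}f(\mathbf x)=\mathbb E_{\boldsymbol\xi}[f(\mathbf x;\boldsymbol\xi)]$, $\mathcal X\subseteq\mathbb R^d$ closed convex, $f(\cdot;\boldsymbol\xi)$ differentiable, $\boldsymbol\xi_t$ independent samples. ZO gradient estimate: $\hat\nabla h(\mathbf x)=(d/\mu)[h(\mathbf x+\mu\mathbf u)-h(\mathbf x)]\mathbf u$, $\mathbf u$ uniform on the unit sphere of $\mathbb R^d$, independent across iterations. Smoothed function: $f_\mu(\mathbf x)=\mathbb E_{\mathbf u\sim U_B}[f(\mathbf x+\mu\mathbf u)]$, $U_B$ uniform on the unit Euclidean ball. ZO-AdaMM: given $\mathbf x_1\in\mathcal X$, $\alpha_t$, $\beta_{1,t},\beta_2\in(0,1]$, $\mathbf m_0=\mathbf 0$, $\mathbf v_0=\mathbf 0$, $\hat{\mathbf v}_0$, for $t=1,\dots,T$: $\hat{\mathbf g}_t=\hat\nabla f_t(\mathbf x_t)$; $\mathbf m_t=\beta_{1,t}\mathbf m_{t-1}+(1-\beta_{1,t})\hat{\mathbf g}_t$; $\mathbf v_t=\beta_2\mathbf v_{t-1}+(1-\beta_2)\hat{\mathbf g}_t^2$; $\hat{\mathbf v}_t=\max(\hat{\mathbf v}_{t-1},\mathbf v_t)$, $\hat{\mathbf V}_t=\mathrm{diag}(\hat{\mathbf v}_t)$; $\mathbf x_{t+1}=\Pi_{\mathcal X,\sqrt{\hat{\mathbf V}_t}}(\mathbf x_t-\alpha_t\hat{\mathbf V}_t^{-1/2}\mathbf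 m_t)$, elementwise operations, $\Pi_{\mathcal X,\mathbf H}(\mathbf a)=\arg\min_{\mathbf x\in\mathcal X}\|\sqrt{\mathbf H}(\mathbf x-\mathbf a)\|_2^2$. Gradient mapping: for a positive definite diagonal $\mathbf H$, $\mathbf g\in\mathbb R^d$, $\omega>0$, $\mathbf x^-\in\mathbb R^d$, let $\mathbf x^+=\arg\min_{\mathbf x\in\mathcal X}\{\langle\mathbf g,\mathbf x\rangle+\frac1{2\omega}\|\mathbf H^{1/2}(\mathbf x-\mathbf x^-)\|^2\}$ and $P_{\mathcal X,\mathbf H}(\mathbf x^-,\mathbf g,\omega)=(\mathbf x^--\mathbf x^+)/\omega$. Convergence measure: $\|\mathcal G(\mathbf x_t)\|^2:=\|\hat{\mathbf V}_t^{1/4}P_{\mathcal X,\hat{\mathbf V}_t^{1/2}}(\mathbf x_t,\nabla f(\mathbf x_t),\alpha_t)\|^2$. $\|\cdot\|$ is the Euclidean norm; expectations are over all randomness. *)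

theory Defs
  imports "HOL-Probability.Probability"
begin

text \<open>Vectors of R^d are represented as real^'n with d = CARD('n).
  Positive definite diagonal matrices diag(h) are represented by their diagonal vector h.\<close>

definition grad :: "(real^'n \<Rightarrow> real) \<Rightarrow> real^'n \<Rightarrow> real^'n" where
  "grad f x = (SOME D. GDERIV f x :> D)"

text \<open>Uniform distribution on the unit Euclidean ball, and on the unit sphere
  (the latter as the radial projection of the former, which is the normalized surface measure).\<close>
definition unif_ball :: "(real^'n) measure" where
  "unif_ball = uniform_measure lborel (ball 0 1)"

definition unif_sphere :: "(real^'n) measure" where
  "unif_sphere = distr unif_ball borel (\<lambda>v. (1 / norm v) *\<^sub>R v)"

definition smooth :: "(real^'n \<Rightarrow> real) \<Rightarrow> real \<Rightarrow> real^'n \<Rightarrow> real" where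
  "smooth f \<mu> x = (\<integral>v. f (x + \<mu> *\<^sub>R v) \<partial>unif_ball)"

definition zo_grad :: "(real^'n \<Rightarrow> real) \<Rightarrow> real \<Rightarrow> real^'n \<Rightarrow> real^'n \<Rightarrow> real^'n" where
  "zo_grad h \<mu> x u = (real CARD('n) / \<mu> * (h (x + \<mu> *\<^sub>R u) - h x)) *\<^sub>R u"

definition hnorm :: "real^'n \<Rightarrow> real^'n \<Rightarrow> real" where
  "hnorm h v = norm (\<chi> i. sqrt (h $ i) * v $ i)"

definition wproj :: "(real^'n) set \<Rightarrow> real^'n \<Rightarrow> real^'n \<Rightarrow> real^'n" where
  "wproj X h a = arg_min_on (\<lambda>x. (hnorm h (x - a))\<^sup>2) X"

definition gmap_plus :: "(real^'n) set \<Rightarrow> real^'n \<Rightarrow> real^'n \<Rightarrow> real^'n \<Rightarrow> real \<Rightarrow> real^'n" where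
  "gmap_plus X h xm g \<omega> = arg_min_on (\<lambda>x. inner g x + 1 / (2 * \<omega>) * (hnorm h (x - xm))\<^sup>2) X"

definition gmap :: "(real^'n) set \<Rightarrow> real^'n \<Rightarrow> real^'n \<Rightarrow> real^'n \<Rightarrow> real \<Rightarrow> real^'n" where
  "gmap X h xm g \<omega> = (1 / \<omega>) *\<^sub>R (xm - gmap_plus X h xm g \<omega>)"

text \<open>State of ZO-AdaMM after iteration t: (x_{t+1}, m_t, v_t, vhat_t); state 0 = (x_1, 0, 0, vhat_0).
  F x s = f(x; s); xs t = xi_t and us t = u_t are the realized samples / directions.\<close>
primrec zo_adamm ::
  "(real^'n \<Rightarrow> 's \<Rightarrow> real) \<Rightarrow> (real^'n) set \<Rightarrow> real^'n \<Rightarrow> real^'n \<Rightarrow>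
   (nat \<Rightarrow> real) \<Rightarrow> (nat \<Rightarrow> real) \<Rightarrow> real \<Rightarrow> real \<Rightarrow> (nat \<Rightarrow> 's) \<Rightarrow> (nat \<Rightarrow> real^'n) \<Rightarrow> nat \<Rightarrow>
   (real^'n) \<times> (real^'n) \<times> (real^'n) \<times> (real^'n)" where
  "zo_adamm F X x1 vh0 \<alpha> \<beta>1 \<beta>2 \<mu> xs us 0 = (x1, 0, 0, vh0)"
| "zo_adamm F X x1 vh0 \<alpha> \<beta>1 \<beta>2 \<mu> xs us (Suc t) =
     (case zo_adamm F X x1 vh0 \<alpha> \<beta>1 \<beta>2 \<mu> xs us t of (x, m, v, vh) \<Rightarrow>
       let g = zo_grad (\<lambda>z. F z (xs (Suc t))) \<mu> x (us (Suc t));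
           m' = \<beta>1 (Suc t) *\<^sub>R m + (1 - \<beta>1 (Suc t)) *\<^sub>R g;
           v' = \<beta>2 *\<^sub>R v + (1 - \<beta>2) *\<^sub>R (\<chi> i. (g $ i)\<^sup>2);
           vh' = (\<chi> i. max (vh $ i) (v' $ i));
           x' = wproj X (\<chi> i. sqrt (vh' $ i))
                  (x - \<alpha> (Suc t) *\<^sub>R (\<chi> i. m' $ i / sqrt (vh' $ i)))
       in (x', m', v', vh'))"

definition zo_x where
  "zo_x F X x1 vh0 \<alpha> \<beta>1 \<beta>2 \<mu> xs us t = fst (zo_adamm F X x1 vh0 \<alpha> \<beta>1 \<beta>2 \<mu> xs us (t - 1))"

definition zo_vhat where
  "zo_vhat F X x1 vh0 \<alpha> \<beta>1 \<beta>2 \<mu> xs us t = snd (snd (snd (zo_adamm F X x1 vh0 \<alpha> \<beta>1 \<beta>2 \<mu> xs us t)))"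

definition zo_ghat where
  "zo_ghat F X x1 vh0 \<alpha> \<beta>1 \<beta>2 \<mu> xs us t =
     zo_grad (\<lambda>z. F z (xs t)) \<mu> (zo_x F X x1 vh0 \<alpha> \<beta>1 \<beta>2 \<mu> xs us t) (us t)"

text \<open>Probability space of all randomness: samples xi_1..xi_T (i.i.d. P), directions
  u_1..u_T (i.i.d. uniform on sphere), and R uniform on {1..T}, all independent.\<close>
definition omega ::
  "'s measure \<Rightarrow> nat \<Rightarrow> ((nat \<Rightarrow> 's) \<times> (nat \<Rightarrow> real^'n) \<times> nat) measure" where
  "omega P T = (PiM {1..T} (\<lambda>_. P)) \<Otimes>\<^sub>M ((PiM {1..T} (\<lambda>_. unif_sphere)) \<Otimes>\<^sub>M uniform_count_measure {1..T})"

end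

theory Submission
  imports Defs
begin

text \<open>With \<open>\<beta>\<^sub>1 = 0\<close> the ZO-AdaMM step is \<open>x\<^sub>t\<^sub>+\<^sub>1 = x\<^sub>t - \<alpha> P\<^sub>t\<close>, where \<open>P\<^sub>t\<close> is the
  gradient mapping of the estimate \<open>g\<^sub>t\<close> in the weighted norm of \<open>H\<^sub>t = diag (sqrt v\<^sub>t) \<ge> c\<close>.
  Gradient mappings are firmly monotone in the gradient, so the descent lemma for the
  \<open>L\<close>-smooth function \<open>f\<^sub>\<mu>\<close> together with \<open>\<alpha> L \<le> c\<close> gives, along every sample path,
  \<open>f\<^sub>\<mu> x\<^sub>t\<^sub>+\<^sub>1 \<le> f\<^sub>\<mu> x\<^sub>t - 3/10 \<alpha> |P(\<nabla>f\<^sub>\<mu>)|\<^sup>2 + 5/4 \<alpha> |g\<^sub>t - \<nabla>f\<^sub>\<mu> x\<^sub>t|\<^sup>2 / c\<close>.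
  Telescoping, and passing from the gradient mapping of \<open>\<nabla>f\<^sub>\<mu>\<close> to that of \<open>\<nabla>f\<close> at the cost of
  \<open>|\<nabla>f - \<nabla>f\<^sub>\<mu>| \<le> L \<mu> E|v| \<le> L \<mu> d / sqrt 3\<close>, bounds \<open>\<Sum>\<^sub>t |G(x\<^sub>t)|\<^sup>2\<close> pathwise;
  the random index \<open>R\<close> is independent of the path, so taking expectations divides by \<open>T\<close>.\<close>

section \<open>Weighted projections and gradient mappings\<close>

lemma norm_power2_vec_sum: "(norm (v::real^'n))\<^sup>2 = (\<Sum>i\<in>UNIV. (v$i)\<^sup>2)"
  by (simp add: power2_norm_eq_inner inner_vec_def power2_eq_square[symmetric])

lemma hnorm_power2: "\<forall>i. 0 < h$i \<Longrightarrow> (hnorm h v)\<^sup>2 = (\<Sum>i\<in>UNIV. h$i * (v$i)\<^sup>2)"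
  unfolding hnorm_def norm_power2_vec_sum by (simp add: power_mult_distrib less_imp_le)

lemma inner_vec_sum: "inner (u::real^'n) v = (\<Sum>i\<in>UNIV. u$i * v$i)"
  by (simp add: inner_vec_def)

lemma nonneg_of_nonneg_linear_quadratic:
  fixes A B :: real
  assumes "\<And>t. 0 < t \<Longrightarrow> t \<le> 1 \<Longrightarrow> 0 \<le> t * A + t\<^sup>2 * B"
  shows "0 \<le> A"
proof (rule tendsto_lowerbound)
  show "((\<lambda>t. A + t * B) \<longlongrightarrow> A) (at_right 0)"
    by (auto intro!: tendsto_eq_intros)
  have "\<forall>\<^sub>F t in at_right (0::real). 0 < t \<and> t \<le> 1"
    by (auto simp: eventually_at_right_field intro: exI[of _ 1])
  then show "\<forall>\<^sub>F t in at_right 0. 0 \<le> A + t * B"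
  proof eventually_elim
    case (elim t)
    then have "0 \<le> t * (A + t * B)"
      using assms[of t] by (simp add: algebra_simps power2_eq_square)
    then show ?case using elim by (simp add: zero_le_mult_iff)
  qed
qed simp

lemma arg_min_on_minimal:
  fixes \<Phi> :: "'a \<Rightarrow> real"
  assumes "\<exists>y\<in>X. \<forall>z\<in>X. \<Phi> y \<le> \<Phi> z"
  shows "arg_min_on \<Phi> X \<in> X" "z \<in> X \<Longrightarrow> \<Phi> (arg_min_on \<Phi> X) \<le> \<Phi> z"
proof -
  from assms obtain y where "is_arg_min \<Phi> (\<lambda>x. x \<in> X) y"
    unfolding is_arg_min_def by (auto simp: not_less)
  then have "is_arg_min \<Phi> (\<lambda>x. x \<in> X) (arg_min_on \<Phi> X)"
    unfolding arg_min_on_def arg_min_def by (rule someI)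
  then show "arg_min_on \<Phi> X \<in> X" "z \<in> X \<Longrightarrow> \<Phi> (arg_min_on \<Phi> X) \<le> \<Phi> z"
    unfolding is_arg_min_def by (auto simp: not_less)
qed

lemma arg_min_on_affine:
  fixes \<Phi> \<Psi> :: "'a \<Rightarrow> real"
  assumes "0 < k" "\<And>z. \<Phi> z = k * \<Psi> z + C"
  shows "arg_min_on \<Phi> S = arg_min_on \<Psi> S"
proof -
  have "is_arg_min \<Phi> (\<lambda>x. x \<in> S) = is_arg_min \<Psi> (\<lambda>x. x \<in> S)"
    unfolding is_arg_min_def fun_eq_iff using assms by auto
  then show ?thesis unfolding arg_min_on_def arg_min_def by simp
qed

text \<open>In the coordinates \<open>z \<mapsto> \<chi> i. sqrt (h$i) * z$i\<close> the weighted projection is the Euclidean one.\<close>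

lemma wproj_minimal:
  fixes h b :: "real^'n"
  assumes h: "\<forall>i. 0 < h$i" and X: "closed X" "X \<noteq> {}"
  shows "wproj X h b \<in> X" "z \<in> X \<Longrightarrow> hnorm h (wproj X h b - b) \<le> hnorm h (z - b)"
proof -
  define D where "D = (\<lambda>z::real^'n. \<chi> i. sqrt (h$i) * z$i)"
  have "linear D" unfolding D_def
    by (rule linearI) (auto simp: vec_eq_iff algebra_simps)
  moreover have "inj D"
    unfolding D_def inj_def using h by (auto simp: vec_eq_iff) (metis less_irrefl)
  ultimately have "closed (D ` X)"
    using X(1) by (rule closed_injective_linear_image[rotated 1])
  then obtain w where w: "w \<in> D ` X" "\<And>v. v \<in> D ` X \<Longrightarrow> dist (D b) w \<le> dist (D b) v"
    using distance_attains_inf X(2) by blast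
  have hnorm_dist: "hnorm h (z - b) = dist (D b) (D z)" for z
  proof -
    have "D z - D b = (\<chi> i. sqrt (h$i) * (z - b)$i)"
      by (simp add: D_def vec_eq_iff algebra_simps)
    then show ?thesis by (metis hnorm_def dist_norm dist_commute)
  qed
  have "\<exists>y\<in>X. \<forall>z\<in>X. (hnorm h (y - b))\<^sup>2 \<le> (hnorm h (z - b))\<^sup>2"
    using w unfolding hnorm_dist by (auto intro!: power_mono)
  from arg_min_on_minimal[OF this]
  show "wproj X h b \<in> X" "z \<in> X \<Longrightarrow> hnorm h (wproj X h b - b) \<le> hnorm h (z - b)"
    unfolding wproj_def by (auto simp: hnorm_def intro: power2_le_imp_le)
qed

lemma wproj_VI:
  fixes h b :: "real^'n"
  assumes h: "\<forall>i. 0 < h$i" and X: "closed X" "convex X" and z: "z \<in> X"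
  shows "0 \<le> (\<Sum>i\<in>UNIV. h$i * (wproj X h b $ i - b$i) * (z$i - wproj X h b $ i))"
proof -
  define y where "y = wproj X h b"
  have X_ne: "X \<noteq> {}" using z by auto
  have y_X: "y \<in> X" unfolding y_def by (rule wproj_minimal(1)[OF h X(1) X_ne])
  have "0 \<le> 2 * (\<Sum>i\<in>UNIV. h$i * (y$i - b$i) * (z$i - y$i))"
  proof (rule nonneg_of_nonneg_linear_quadratic)
    fix t :: real assume t: "0 < t" "t \<le> 1"
    have "(1 - t) *\<^sub>R y + t *\<^sub>R z \<in> X"
      using X(2) y_X z t unfolding convex_def by auto
    moreover have "(1 - t) *\<^sub>R y + t *\<^sub>R z = y + t *\<^sub>R (z - y)"
      by (simp add: algebra_simps)
    ultimately have "hnorm h (y - b) \<le> hnorm h (y + t *\<^sub>R (z - y) - b)"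
      unfolding y_def by (intro wproj_minimal(2)[OF h X(1) X_ne]) simp
    then have "(hnorm h (y - b))\<^sup>2 \<le> (hnorm h (y + t *\<^sub>R (z - y) - b))\<^sup>2"
      by (rule power_mono) (simp add: hnorm_def)
    moreover have "(hnorm h (y + t *\<^sub>R (z - y) - b))\<^sup>2 - (hnorm h (y - b))\<^sup>2
      = t * (2 * (\<Sum>i\<in>UNIV. h$i * (y$i - b$i) * (z$i - y$i))) + t\<^sup>2 * (\<Sum>i\<in>UNIV. h$i * (z$i - y$i)\<^sup>2)"
      unfolding hnorm_power2[OF h]
      by (simp add: sum_distrib_left sum_subtractf[symmetric] sum.distrib[symmetric]
          power2_eq_square algebra_simps)
    ultimately show "0 \<le> t * (2 * (\<Sum>i\<in>UNIV. h$i * (y$i - b$i) * (z$i - y$i)))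
        + t\<^sup>2 * (\<Sum>i\<in>UNIV. h$i * (z$i - y$i)\<^sup>2)"
      by linarith
  qed
  then show ?thesis unfolding y_def by simp
qed

lemma gmap_plus_eq_wproj:
  fixes h x g :: "real^'n"
  assumes h: "\<forall>i. 0 < h$i" and \<alpha>: "0 < \<alpha>"
  shows "gmap_plus X h x g \<alpha> = wproj X h (x - \<alpha> *\<^sub>R (\<chi> i. g$i / h$i))"
  unfolding gmap_plus_def wproj_def
proof (rule arg_min_on_affine[where k = "1 / (2 * \<alpha>)"
      and C = "inner g x - (\<Sum>i\<in>UNIV. \<alpha> * (g$i)\<^sup>2 / (2 * h$i))"])
  show "0 < 1 / (2 * \<alpha>)" using \<alpha> by simp
  fix z
  have "inner g z + 1 / (2 * \<alpha>) * (hnorm h (z - x))\<^sup>2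
      = (\<Sum>i\<in>UNIV. g$i * z$i + 1 / (2 * \<alpha>) * (h$i * (z$i - x$i)\<^sup>2))"
    unfolding hnorm_power2[OF h] inner_vec_sum by (simp add: sum.distrib sum_distrib_left)
  also have "\<dots> = (\<Sum>i\<in>UNIV. 1 / (2 * \<alpha>) * (h$i * ((z - (x - \<alpha> *\<^sub>R (\<chi> i. g$i / h$i)))$i)\<^sup>2)
        + (g$i * x$i - \<alpha> * (g$i)\<^sup>2 / (2 * h$i)))"
    using h \<alpha> by (intro sum.cong refl) (simp add: field_simps power2_eq_square less_imp_neq[symmetric])
  also have "\<dots> = 1 / (2 * \<alpha>) * (hnorm h (z - (x - \<alpha> *\<^sub>R (\<chi> i. g$i / h$i))))\<^sup>2
        + (inner g x - (\<Sum>i\<in>UNIV. \<alpha> * (g$i)\<^sup>2 / (2 * h$i)))"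
    unfolding hnorm_power2[OF h] inner_vec_sum
    by (simp add: sum.distrib sum_distrib_left sum_subtractf)
  finally show "inner g z + 1 / (2 * \<alpha>) * (hnorm h (z - x))\<^sup>2
      = 1 / (2 * \<alpha>) * (hnorm h (z - (x - \<alpha> *\<^sub>R (\<chi> i. g$i / h$i))))\<^sup>2
        + (inner g x - (\<Sum>i\<in>UNIV. \<alpha> * (g$i)\<^sup>2 / (2 * h$i)))" .
qed

lemma gmap_VI:
  fixes h x g :: "real^'n"
  assumes h: "\<forall>i. 0 < h$i" and \<alpha>: "0 < \<alpha>" and X: "closed X" "convex X" "X \<noteq> {}"
  defines "p \<equiv> gmap X h x g \<alpha>"
  shows "x - \<alpha> *\<^sub>R p \<in> X"
    and "z \<in> X \<Longrightarrow> 0 \<le> (\<Sum>i\<in>UNIV. (g$i - h$i * p$i) * (z$i - (x - \<alpha> *\<^sub>R p)$i))"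
proof -
  define b where "b = x - \<alpha> *\<^sub>R (\<chi> i. g$i / h$i)"
  have y: "x - \<alpha> *\<^sub>R p = wproj X h b"
    using \<alpha> by (simp add: p_def b_def gmap_def gmap_plus_eq_wproj[OF h \<alpha>])
  then show "x - \<alpha> *\<^sub>R p \<in> X" using wproj_minimal(1)[OF h X(1,3)] by simp
  assume z: "z \<in> X"
  have "(\<Sum>i\<in>UNIV. h$i * (wproj X h b $ i - b$i) * (z$i - wproj X h b $ i))
      = \<alpha> * (\<Sum>i\<in>UNIV. (g$i - h$i * p$i) * (z$i - (x - \<alpha> *\<^sub>R p)$i))"
    unfolding y[symmetric] sum_distrib_left
    using h by (intro sum.cong refl) (simp add: b_def field_simps less_imp_neq[symmetric])
  with wproj_VI[OF h X(1,2) z, of b] \<alpha>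
  show "0 \<le> (\<Sum>i\<in>UNIV. (g$i - h$i * p$i) * (z$i - (x - \<alpha> *\<^sub>R p)$i))"
    by (simp add: zero_le_mult_iff)
qed

lemma gmap_firmly_monotone:
  fixes h x g1 g2 :: "real^'n"
  assumes h: "\<forall>i. 0 < h$i" and \<alpha>: "0 < \<alpha>" and X: "closed X" "convex X" "X \<noteq> {}"
  defines "p1 \<equiv> gmap X h x g1 \<alpha>" and "p2 \<equiv> gmap X h x g2 \<alpha>"
  shows "(hnorm h (p1 - p2))\<^sup>2 \<le> inner (g1 - g2) (p1 - p2)"
proof -
  have "0 \<le> (\<Sum>i\<in>UNIV. (g1$i - h$i * p1$i) * ((x - \<alpha> *\<^sub>R p2)$i - (x - \<alpha> *\<^sub>R p1)$i))"
    unfolding p1_def p2_def by (rule gmap_VI(2)[OF h \<alpha> X gmap_VI(1)[OF h \<alpha> X]])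
  moreover have "0 \<le> (\<Sum>i\<in>UNIV. (g2$i - h$i * p2$i) * ((x - \<alpha> *\<^sub>R p1)$i - (x - \<alpha> *\<^sub>R p2)$i))"
    unfolding p1_def p2_def by (rule gmap_VI(2)[OF h \<alpha> X gmap_VI(1)[OF h \<alpha> X]])
  moreover have "(\<Sum>i\<in>UNIV. (g1$i - h$i * p1$i) * ((x - \<alpha> *\<^sub>R p2)$i - (x - \<alpha> *\<^sub>R p1)$i))
      + (\<Sum>i\<in>UNIV. (g2$i - h$i * p2$i) * ((x - \<alpha> *\<^sub>R p1)$i - (x - \<alpha> *\<^sub>R p2)$i))
      = \<alpha> * (inner (g1 - g2) (p1 - p2) - (hnorm h (p1 - p2))\<^sup>2)"
    unfolding hnorm_power2[OF h] inner_vec_sum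
    by (simp add: sum.distrib[symmetric] sum_subtractf[symmetric] sum_distrib_left
        power2_eq_square algebra_simps)
  ultimately have "0 \<le> \<alpha> * (inner (g1 - g2) (p1 - p2) - (hnorm h (p1 - p2))\<^sup>2)"
    by linarith
  then show ?thesis using \<alpha> by (simp add: zero_le_mult_iff)
qed

lemma gmap_le_inner:
  fixes h x g :: "real^'n"
  assumes h: "\<forall>i. 0 < h$i" and \<alpha>: "0 < \<alpha>" and X: "closed X" "convex X" and x: "x \<in> X"
  defines "p \<equiv> gmap X h x g \<alpha>"
  shows "(hnorm h p)\<^sup>2 \<le> inner g p"
proof -
  have X_ne: "X \<noteq> {}" using x by auto
  have "0 \<le> (\<Sum>i\<in>UNIV. (g$i - h$i * p$i) * (x$i - (x - \<alpha> *\<^sub>R p)$i))"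
    unfolding p_def by (rule gmap_VI(2)[OF h \<alpha> X X_ne x])
  also have "\<dots> = \<alpha> * (inner g p - (hnorm h p)\<^sup>2)"
    unfolding hnorm_power2[OF h] inner_vec_sum
    by (simp add: sum_subtractf[symmetric] sum_distrib_left power2_eq_square algebra_simps)
  finally show ?thesis using \<alpha> by (simp add: zero_le_mult_iff)
qed

lemma hnorm_triangle: "hnorm h (u + v) \<le> hnorm h u + hnorm h v"
proof -
  have "(\<chi> i. sqrt (h$i) * (u + v)$i) = (\<chi> i. sqrt (h$i) * u$i) + (\<chi> i. sqrt (h$i) * v$i)"
    by (simp add: vec_eq_iff algebra_simps)
  then show ?thesis unfolding hnorm_def by (metis norm_triangle_ineq)
qed

lemma power2_add_le_weighted:
  fixes a b \<epsilon> :: real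
  assumes "0 < \<epsilon>"
  shows "(a + b)\<^sup>2 \<le> (1 + \<epsilon>) * a\<^sup>2 + (1 + 1 / \<epsilon>) * b\<^sup>2"
proof -
  have "0 \<le> (\<epsilon> * a - b)\<^sup>2 / \<epsilon>" using assms by simp
  also have "\<dots> = (1 + \<epsilon>) * a\<^sup>2 + (1 + 1 / \<epsilon>) * b\<^sup>2 - (a + b)\<^sup>2"
    using assms by (simp add: field_simps power2_eq_square)
  finally show ?thesis by simp
qed

lemma hnorm_power2_ge:
  assumes "\<forall>i. c \<le> h$i" "0 < c"
  shows "c * (norm v)\<^sup>2 \<le> (hnorm h v)\<^sup>2"
proof -
  have h: "\<forall>i. 0 < h$i" using assms by (auto intro: less_le_trans)
  show ?thesis
    unfolding hnorm_power2[OF h] norm_power2_vec_sum sum_distrib_left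
    using assms(1) by (intro sum_mono mult_right_mono) auto
qed

lemma hnorm_power2_le_of_le_inner:
  fixes h w r :: "real^'n"
  assumes hc: "\<forall>i. c \<le> h$i" and c: "0 < c" and le: "(hnorm h r)\<^sup>2 \<le> inner w r"
  shows "(hnorm h r)\<^sup>2 \<le> (norm w)\<^sup>2 / c"
proof -
  have h: "\<forall>i. 0 < h$i" using hc c by (auto intro: less_le_trans)
  have "w$i * r$i \<le> h$i * (r$i)\<^sup>2 / 2 + (w$i)\<^sup>2 / (2 * c)" for i
  proof -
    have hi: "0 < h$i" using h by auto
    have "0 \<le> (h$i * r$i - w$i)\<^sup>2 / (2 * h$i)" using hi by simp
    also have "\<dots> = h$i * (r$i)\<^sup>2 / 2 + (w$i)\<^sup>2 / (2 * h$i) - w$i * r$i"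
      using hi by (simp add: power2_eq_square field_simps)
    also have "(w$i)\<^sup>2 / (2 * h$i) \<le> (w$i)\<^sup>2 / (2 * c)"
      using hi hc c by (intro divide_left_mono mult_pos_pos) auto
    finally show ?thesis by simp
  qed
  then have "inner w r \<le> (\<Sum>i\<in>UNIV. h$i * (r$i)\<^sup>2 / 2 + (w$i)\<^sup>2 / (2 * c))"
    unfolding inner_vec_sum by (rule sum_mono)
  also have "\<dots> = (hnorm h r)\<^sup>2 / 2 + (norm w)\<^sup>2 / (2 * c)"
    unfolding hnorm_power2[OF h] norm_power2_vec_sum by (simp add: sum.distrib sum_divide_distrib)
  finally show ?thesis using le by simp
qed

text \<open>The constants \<open>3/10\<close> and \<open>5/4\<close> come from completing the square
  \<open>(2 h p - 5 (e - h (q - p)))\<^sup>2 \<ge> 0\<close> coordinatewise.\<close>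

lemma firm_tradeoff:
  fixes h e q p :: "real^'n"
  assumes hc: "\<forall>i. c \<le> h$i" and c: "0 < c"
    and firm: "(hnorm h (q - p))\<^sup>2 \<le> inner e (q - p)"
  shows "inner e q - (hnorm h q)\<^sup>2 / 2 \<le> 5/4 * (norm e)\<^sup>2 / c - 3/10 * (hnorm h p)\<^sup>2"
proof -
  define r where "r = q - p"
  have h: "\<forall>i. 0 < h$i" using hc c by (auto intro: less_le_trans)
  have "e$i * q$i - h$i * (q$i)\<^sup>2 / 2 - 5/4 * (e$i)\<^sup>2 / c + 3/10 * (h$i * (p$i)\<^sup>2)
        \<le> 3/4 * (h$i * (r$i)\<^sup>2) - 3/2 * (e$i * r$i)" for i
  proof -
    have hi: "0 < h$i" using h by auto
    have "0 \<le> (2 * h$i * p$i - 5 * (e$i - h$i * r$i))\<^sup>2 / (20 * h$i)" using hi by simp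
    also have "\<dots> = 3/4 * (h$i * (r$i)\<^sup>2) - 3/2 * (e$i * r$i)
        - (e$i * q$i - h$i * (q$i)\<^sup>2 / 2 - 5/4 * (e$i)\<^sup>2 / h$i + 3/10 * (h$i * (p$i)\<^sup>2))"
      using hi by (simp add: r_def power2_eq_square field_simps)
    also have "5/4 * (e$i)\<^sup>2 / h$i \<le> 5/4 * (e$i)\<^sup>2 / c"
      using hi hc c by (intro divide_left_mono mult_pos_pos) auto
    finally show ?thesis by simp
  qed
  then have "(\<Sum>i\<in>UNIV. e$i * q$i - h$i * (q$i)\<^sup>2 / 2 - 5/4 * (e$i)\<^sup>2 / c + 3/10 * (h$i * (p$i)\<^sup>2))
      \<le> (\<Sum>i\<in>UNIV. 3/4 * (h$i * (r$i)\<^sup>2) - 3/2 * (e$i * r$i))"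
    by (rule sum_mono)
  moreover have "(\<Sum>i\<in>UNIV. e$i * q$i - h$i * (q$i)\<^sup>2 / 2 - 5/4 * (e$i)\<^sup>2 / c + 3/10 * (h$i * (p$i)\<^sup>2))
      = inner e q - (hnorm h q)\<^sup>2 / 2 - 5/4 * (norm e)\<^sup>2 / c + 3/10 * (hnorm h p)\<^sup>2"
    unfolding hnorm_power2[OF h] inner_vec_sum norm_power2_vec_sum
    by (simp add: sum.distrib sum_subtractf sum_distrib_left sum_divide_distrib)
  moreover have "(\<Sum>i\<in>UNIV. 3/4 * (h$i * (r$i)\<^sup>2) - 3/2 * (e$i * r$i))
      = 3/4 * (hnorm h r)\<^sup>2 - 3/2 * inner e r"
    unfolding hnorm_power2[OF h] inner_vec_sum
    by (simp add: sum_subtractf sum_distrib_left)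
  moreover have "(hnorm h r)\<^sup>2 \<le> inner e r" and "0 \<le> (hnorm h r)\<^sup>2"
    using firm by (simp_all add: r_def)
  ultimately show ?thesis by linarith
qed

lemma gmap_perturbation:
  fixes h x g1 g2 :: "real^'n"
  assumes hc: "\<forall>i. c \<le> h$i" and c: "0 < c" and \<alpha>: "0 < \<alpha>"
    and X: "closed X" "convex X" "X \<noteq> {}"
  shows "(hnorm h (gmap X h x g1 \<alpha>))\<^sup>2
    \<le> 9/5 * (hnorm h (gmap X h x g2 \<alpha>))\<^sup>2 + 9/4 * (norm (g1 - g2))\<^sup>2 / c"
proof -
  define p1 p2 where "p1 = gmap X h x g1 \<alpha>" and "p2 = gmap X h x g2 \<alpha>"
  have h: "\<forall>i. 0 < h$i" using hc c by (auto intro: less_le_trans)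
  have "(hnorm h (p1 - p2))\<^sup>2 \<le> (norm (g1 - g2))\<^sup>2 / c"
    unfolding p1_def p2_def
    by (rule hnorm_power2_le_of_le_inner[OF hc c gmap_firmly_monotone[OF h \<alpha> X]])
  moreover have "hnorm h p1 \<le> hnorm h p2 + hnorm h (p1 - p2)"
    using hnorm_triangle[of h p2 "p1 - p2"] by simp
  then have "(hnorm h p1)\<^sup>2 \<le> (hnorm h p2 + hnorm h (p1 - p2))\<^sup>2"
    by (rule power_mono) (simp add: hnorm_def)
  moreover have "(hnorm h p2 + hnorm h (p1 - p2))\<^sup>2
      \<le> (1 + 4/5) * (hnorm h p2)\<^sup>2 + (1 + 1 / (4/5)) * (hnorm h (p1 - p2))\<^sup>2"
    by (rule power2_add_le_weighted) simp
  ultimately show ?thesis unfolding p1_def p2_def by simp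
qed

lemma gmap_descent_step:
  fixes \<phi> :: "real^'n \<Rightarrow> real" and x y g G :: "real^'n"
  assumes hc: "\<forall>i. c \<le> h$i" and c: "0 < c" and \<alpha>: "0 < \<alpha>" "\<alpha> * L \<le> c"
    and X: "closed X" "convex X" and x: "x \<in> X"
    and desc: "\<phi> y \<le> \<phi> x + inner G (y - x) + L / 2 * (norm (y - x))\<^sup>2"
    and y: "y = x - \<alpha> *\<^sub>R gmap X h x g \<alpha>"
  shows "\<phi> y \<le> \<phi> x - 3/10 * \<alpha> * (hnorm h (gmap X h x G \<alpha>))\<^sup>2 + 5/4 * \<alpha> * (norm (g - G))\<^sup>2 / c"
proof -
  define q p where "q = gmap X h x g \<alpha>" and "p = gmap X h x G \<alpha>"
  have h: "\<forall>i. 0 < h$i" using hc c by (auto intro: less_le_trans)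
  have X_ne: "X \<noteq> {}" using x by auto
  have q_le: "(hnorm h q)\<^sup>2 \<le> inner g q"
    unfolding q_def by (rule gmap_le_inner[OF h \<alpha>(1) X x])
  have tradeoff: "inner (g - G) q - (hnorm h q)\<^sup>2 / 2 \<le> 5/4 * (norm (g - G))\<^sup>2 / c - 3/10 * (hnorm h p)\<^sup>2"
    unfolding q_def p_def by (rule firm_tradeoff[OF hc c gmap_firmly_monotone[OF h \<alpha>(1) X X_ne]])
  have "L / 2 * (norm (y - x))\<^sup>2 = \<alpha> / 2 * (\<alpha> * L * (norm q)\<^sup>2)"
    by (simp add: y q_def power2_eq_square)
  also have "\<dots> \<le> \<alpha> / 2 * (hnorm h q)\<^sup>2"
  proof -
    have "\<alpha> * L * (norm q)\<^sup>2 \<le> c * (norm q)\<^sup>2" using \<alpha>(2) by (rule mult_right_mono) simp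
    then show ?thesis using hnorm_power2_ge[OF hc c, of q] \<alpha>(1) by (intro mult_left_mono) auto
  qed
  finally have "\<phi> y \<le> \<phi> x - \<alpha> * inner g q + \<alpha> * inner (g - G) q + \<alpha> / 2 * (hnorm h q)\<^sup>2"
    using desc by (simp add: y q_def inner_diff_left algebra_simps)
  also have "\<dots> \<le> \<phi> x + \<alpha> * (inner (g - G) q - (hnorm h q)\<^sup>2 / 2)"
    using q_le \<alpha>(1) by (simp add: algebra_simps)
  also have "\<dots> \<le> \<phi> x + \<alpha> * (5/4 * (norm (g - G))\<^sup>2 / c - 3/10 * (hnorm h p)\<^sup>2)"
    using tradeoff \<alpha>(1) by simp
  finally show ?thesis by (simp add: p_def algebra_simps)
qed

lemma gmap_descent_telescoped:
  fixes \<phi> :: "real^'n \<Rightarrow> real" and G :: "real^'n \<Rightarrow> real^'n" and x g h :: "nat \<Rightarrow> real^'n"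
  assumes c: "0 < c" and \<alpha>: "0 < \<alpha>" "\<alpha> * L \<le> c" and X: "closed X" "convex X"
    and desc: "\<And>x y. \<phi> y \<le> \<phi> x + inner (G x) (y - x) + L / 2 * (norm (y - x))\<^sup>2"
    and hc: "\<And>t. t \<in> {1..T} \<Longrightarrow> \<forall>i. c \<le> h t $ i"
    and x: "\<And>t. t \<in> {1..T} \<Longrightarrow> x t \<in> X"
    and step: "\<And>t. t \<in> {1..T} \<Longrightarrow> x (Suc t) = x t - \<alpha> *\<^sub>R gmap X (h t) (x t) (g t) \<alpha>"
    and Df: "\<phi> (x 1) - \<phi> (x (Suc T)) \<le> Df"
  shows "(\<Sum>t=1..T. (hnorm (h t) (gmap X (h t) (x t) (G (x t)) \<alpha>))\<^sup>2)
    \<le> 10/3 * Df / \<alpha> + 25 / (6 * c) * (\<Sum>t=1..T. (norm (g t - G (x t)))\<^sup>2)"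
proof -
  define S E where "S t = (hnorm (h t) (gmap X (h t) (x t) (G (x t)) \<alpha>))\<^sup>2"
    and "E t = (norm (g t - G (x t)))\<^sup>2" for t
  have "3/10 * \<alpha> * S t \<le> \<phi> (x t) - \<phi> (x (Suc t)) + 5/4 * \<alpha> / c * E t" if t: "t \<in> {1..T}" for t
    using gmap_descent_step[OF hc[OF t] c \<alpha> X x[OF t] desc step[OF t]] by (simp add: S_def E_def)
  then have "(\<Sum>t=1..T. 3/10 * \<alpha> * S t) \<le> (\<Sum>t=1..T. \<phi> (x t) - \<phi> (x (Suc t)) + 5/4 * \<alpha> / c * E t)"
    by (rule sum_mono)
  also have "\<dots> = (\<Sum>t=1..T. \<phi> (x t) - \<phi> (x (Suc t))) + 5/4 * \<alpha> / c * (\<Sum>t=1..T. E t)"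
    by (simp only: sum.distrib sum_distrib_left)
  also have "(\<Sum>t=1..T. \<phi> (x t) - \<phi> (x (Suc t))) = \<phi> (x 1) - \<phi> (x (Suc T))"
    using sum_Suc_diff[of 1 T "\<lambda>t. \<phi> (x t)"] by (simp add: sum_subtractf)
  finally have "3/10 * \<alpha> * (\<Sum>t=1..T. S t) \<le> Df + 5/4 * \<alpha> / c * (\<Sum>t=1..T. E t)"
    using Df by (simp add: sum_distrib_left)
  then show ?thesis unfolding S_def E_def using \<alpha>(1) c by (simp add: field_simps)
qed

text \<open>The descent is driven by the gradient \<open>G\<close> of \<open>\<phi>\<close>, while the convergence measure is the
  gradient mapping of another gradient field \<open>G'\<close> (in the application \<open>\<phi>\<close> is the smoothed
  objective and \<open>G'\<close> the gradient of the original one).\<close>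

lemma gmap_descent_sum:
  fixes \<phi> :: "real^'n \<Rightarrow> real" and G G' :: "real^'n \<Rightarrow> real^'n" and x g h :: "nat \<Rightarrow> real^'n"
  assumes c: "0 < c" and \<alpha>: "0 < \<alpha>" "\<alpha> * L \<le> c" and X: "closed X" "convex X"
    and desc: "\<And>x y. \<phi> y \<le> \<phi> x + inner (G x) (y - x) + L / 2 * (norm (y - x))\<^sup>2"
    and hc: "\<And>t. t \<in> {1..T} \<Longrightarrow> \<forall>i. c \<le> h t $ i"
    and x: "\<And>t. t \<in> {1..T} \<Longrightarrow> x t \<in> X"
    and step: "\<And>t. t \<in> {1..T} \<Longrightarrow> x (Suc t) = x t - \<alpha> *\<^sub>R gmap X (h t) (x t) (g t) \<alpha>"
    and B: "\<And>t. t \<in> {1..T} \<Longrightarrow> (norm (G' (x t) - G (x t)))\<^sup>2 \<le> B"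
    and Df: "\<phi> (x 1) - \<phi> (x (Suc T)) \<le> Df"
  shows "(\<Sum>t=1..T. (hnorm (h t) (gmap X (h t) (x t) (G' (x t)) \<alpha>))\<^sup>2)
    \<le> 6 * Df / \<alpha> + 15 / (2 * c) * (\<Sum>t=1..T. (norm (g t - G (x t)))\<^sup>2) + 9 * T * B / (4 * c)"
proof -
  define S where "S t = (hnorm (h t) (gmap X (h t) (x t) (G (x t)) \<alpha>))\<^sup>2" for t
  have "(hnorm (h t) (gmap X (h t) (x t) (G' (x t)) \<alpha>))\<^sup>2 \<le> 9/5 * S t + 9/4 * B / c"
    if t: "t \<in> {1..T}" for t
  proof -
    have "(hnorm (h t) (gmap X (h t) (x t) (G' (x t)) \<alpha>))\<^sup>2
        \<le> 9/5 * S t + 9/4 * (norm (G' (x t) - G (x t)))\<^sup>2 / c"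
      unfolding S_def using x[OF t] by (intro gmap_perturbation[OF hc[OF t] c \<alpha>(1) X]) auto
    also have "\<dots> \<le> 9/5 * S t + 9/4 * B / c"
      using B[OF t] c by (simp add: divide_right_mono)
    finally show ?thesis .
  qed
  then have "(\<Sum>t=1..T. (hnorm (h t) (gmap X (h t) (x t) (G' (x t)) \<alpha>))\<^sup>2)
      \<le> (\<Sum>t=1..T. 9/5 * S t + 9/4 * B / c)"
    by (rule sum_mono)
  also have "\<dots> = 9/5 * (\<Sum>t=1..T. S t) + T * (9/4 * B / c)"
    by (simp add: sum.distrib sum_distrib_left)
  also have "\<dots> \<le> 9/5 * (10/3 * Df / \<alpha> + 25 / (6 * c) * (\<Sum>t=1..T. (norm (g t - G (x t)))\<^sup>2))
      + T * (9/4 * B / c)"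
    unfolding S_def using gmap_descent_telescoped[OF c \<alpha> X desc hc x step Df] by simp
  finally show ?thesis by (simp add: field_simps)
qed

section \<open>Smoothness of expectations\<close>

lemma grad_eqI:
  fixes \<phi> :: "real^'n \<Rightarrow> real"
  assumes "(\<phi> has_derivative (\<lambda>h. inner h D)) (at x)"
  shows "grad \<phi> x = D"
proof -
  have "GDERIV \<phi> x :> D" using assms by (simp add: gderiv_def)
  then have "GDERIV \<phi> x :> grad \<phi> x" unfolding grad_def by (rule someI)
  then have d2: "(\<phi> has_derivative (\<lambda>h. inner h (grad \<phi> x))) (at x)" by (simp add: gderiv_def)
  have "(\<lambda>h. inner h D) = (\<lambda>h. inner h (grad \<phi> x))"
    by (rule has_derivative_unique[OF assms d2])
  then have "inner (D - grad \<phi> x) D = inner (D - grad \<phi> x) (grad \<phi> x)" by metis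
  then have "inner (D - grad \<phi> x) (D - grad \<phi> x) = 0" by (simp add: inner_diff_right)
  then show ?thesis by simp
qed

lemma has_derivative_grad:
  fixes \<phi> :: "real^'n \<Rightarrow> real"
  assumes "\<phi> differentiable (at x)"
  shows "(\<phi> has_derivative (\<lambda>h. inner h (grad \<phi> x))) (at x)"
proof -
  from assms obtain D where D: "(\<phi> has_derivative D) (at x)" unfolding differentiable_def by blast
  have lin: "linear D" using has_derivative_linear[OF D] .
  define v :: "real^'n" where "v = (\<Sum>i\<in>Basis. D i *\<^sub>R i)"
  have "D h = inner h v" for h
  proof -
    have "D h \<bullet> 1 = (\<Sum>i\<in>Basis. (h\<bullet>i) * (D i \<bullet> 1))" by (rule Linear_Algebra.linear_componentwise[OF lin])
    then show ?thesis by (simp add: v_def inner_sum_right mult.commute)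
  qed
  then have Dv: "D = (\<lambda>h. inner h v)" by auto
  have "grad \<phi> x = v" by (rule grad_eqI) (use D Dv in simp)
  then show ?thesis using D Dv by simp
qed

lemma has_real_derivative_along_line:
  fixes \<phi> :: "'a::real_inner \<Rightarrow> real"
  assumes "(\<phi> has_derivative (\<lambda>h. inner h D)) (at (x + t *\<^sub>R w))"
  shows "((\<lambda>t. \<phi> (x + t *\<^sub>R w)) has_real_derivative inner w D) (at t)"
proof -
  have a: "((\<lambda>t. x + t *\<^sub>R w) has_derivative (\<lambda>s. s *\<^sub>R w)) (at t)"
    by (auto intro!: derivative_eq_intros)
  have "((\<lambda>t. \<phi> (x + t *\<^sub>R w)) has_derivative (\<lambda>s. inner (s *\<^sub>R w) D)) (at t)"
    by (rule has_derivative_compose[OF a assms])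
  moreover have "(\<lambda>s. inner (s *\<^sub>R w) D) = (*) (inner w D)" by (auto simp: mult.commute)
  ultimately show ?thesis by (simp add: has_field_derivative_def)
qed

lemma lipschitz_grad_quadratic_bound:
  fixes \<phi> :: "'a::real_inner \<Rightarrow> real" and D :: "'a \<Rightarrow> 'a"
  assumes der: "\<And>x. (\<phi> has_derivative (\<lambda>h. inner h (D x))) (at x)"
    and lip: "\<And>x y. norm (D x - D y) \<le> L * norm (x - y)"
  shows "\<bar>\<phi> y - \<phi> x - inner (D x) (y - x)\<bar> \<le> L / 2 * (norm (y - x))\<^sup>2"
proof -
  define w where "w = y - x"
  have dpsi: "((\<lambda>t. \<phi> (x + t *\<^sub>R w)) has_real_derivative inner w (D (x + t *\<^sub>R w))) (at t)" for t
    by (rule has_real_derivative_along_line[OF der])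
  have bnd: "\<bar>inner w (D (x + t *\<^sub>R w)) - inner w (D x)\<bar> \<le> L * t * (norm w)\<^sup>2" if "0 \<le> t" for t
  proof -
    have "\<bar>inner w (D (x + t *\<^sub>R w)) - inner w (D x)\<bar> = \<bar>inner w (D (x + t *\<^sub>R w) - D x)\<bar>"
      by (simp add: inner_diff_right)
    also have "\<dots> \<le> norm w * norm (D (x + t *\<^sub>R w) - D x)" by (rule Cauchy_Schwarz_ineq2)
    also have "\<dots> \<le> norm w * (L * norm (t *\<^sub>R w))"
      using lip[of "x + t *\<^sub>R w" x] by (intro mult_left_mono) auto
    also have "\<dots> = L * t * (norm w)\<^sup>2" using that by (simp add: power2_eq_square)
    finally show ?thesis .
  qed
  define u where "u t = \<phi> (x + t *\<^sub>R w) - t * inner w (D x) - L / 2 * t\<^sup>2 * (norm w)\<^sup>2" for t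
  define l where "l t = \<phi> (x + t *\<^sub>R w) - t * inner w (D x) + L / 2 * t\<^sup>2 * (norm w)\<^sup>2" for t
  have du: "(u has_real_derivative (inner w (D (x + t *\<^sub>R w)) - inner w (D x) - L * t * (norm w)\<^sup>2)) (at t)" for t
    unfolding u_def by (rule derivative_eq_intros dpsi refl | simp)+
  have dl: "(l has_real_derivative (inner w (D (x + t *\<^sub>R w)) - inner w (D x) + L * t * (norm w)\<^sup>2)) (at t)" for t
    unfolding l_def by (rule derivative_eq_intros dpsi refl | simp)+
  have "u 1 \<le> u 0"
    by (rule DERIV_nonpos_imp_nonincreasing[of 0 1]) (use du bnd in \<open>fastforce+\<close>)
  moreover have "l 0 \<le> l 1"
    by (rule DERIV_nonneg_imp_nondecreasing[of 0 1]) (use dl bnd in \<open>fastforce+\<close>)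
  ultimately have "\<phi> y - \<phi> x - inner (D x) (y - x) \<le> L / 2 * (norm (y - x))\<^sup>2"
      "-(\<phi> y - \<phi> x - inner (D x) (y - x)) \<le> L / 2 * (norm (y - x))\<^sup>2"
    unfolding u_def l_def w_def by (simp_all add: inner_commute)
  then show ?thesis by (simp only: abs_le_iff)
qed

lemma has_derivative_of_quadratic_bound:
  fixes \<phi> :: "'a::real_inner \<Rightarrow> real"
  assumes q: "\<And>y. \<bar>\<phi> y - \<phi> x - inner D (y - x)\<bar> \<le> L / 2 * (norm (y - x))\<^sup>2"
  shows "(\<phi> has_derivative (\<lambda>h. inner h D)) (at x)"
  unfolding has_derivative_at_alt
proof (intro conjI allI impI)
  show "bounded_linear (\<lambda>h. inner h D)" by (rule bounded_linear_inner_left)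
  fix e :: real assume e: "0 < e"
  define d where "d = 2 * e / (\<bar>L\<bar> + 1)"
  have d: "0 < d" using e by (simp add: d_def)
  have "\<forall>y. norm (y - x) < d \<longrightarrow> norm (\<phi> y - \<phi> x - inner (y - x) D) \<le> e * norm (y - x)"
  proof (intro allI impI)
    fix y assume y: "norm (y - x) < d"
    have "L / 2 * norm (y - x) \<le> \<bar>L\<bar>/2 * d" using y by (intro mult_mono) auto
    also have "\<dots> \<le> e" using e unfolding d_def by (simp add: field_simps)
    finally have a: "L / 2 * norm (y - x) \<le> e" .
    have "norm (\<phi> y - \<phi> x - inner (y - x) D) \<le> L / 2 * (norm (y - x))\<^sup>2"
      using q[of y] by (simp add: inner_commute)
    also have "\<dots> = (L / 2 * norm (y - x)) * norm (y - x)" by (simp add: power2_eq_square)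
    also have "\<dots> \<le> e * norm (y - x)" using a by (intro mult_right_mono) auto
    finally show "norm (\<phi> y - \<phi> x - inner (y - x) D) \<le> e * norm (y - x)" .
  qed
  then show "\<exists>d>0. \<forall>y. norm (y - x) < d \<longrightarrow> norm (\<phi> y - \<phi> x - inner (y - x) D) \<le> e * norm (y - x)"
    using d by blast
qed

lemma integral_quadratic_bound:
  fixes \<Phi> :: "'a::euclidean_space \<Rightarrow> 'b \<Rightarrow> real" and D\<Phi> :: "'a \<Rightarrow> 'b \<Rightarrow> 'a"
  assumes M: "prob_space M"
    and int: "\<And>x. integrable M (\<Phi> x)"
    and dint: "\<And>x. integrable M (D\<Phi> x)"
    and quad: "\<And>x y s. s \<in> space M \<Longrightarrow> \<bar>\<Phi> y s - \<Phi> x s - inner (D\<Phi> x s) (y - x)\<bar> \<le> L / 2 * (norm (y - x))\<^sup>2"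
  shows "\<bar>(\<integral>s. \<Phi> y s \<partial>M) - (\<integral>s. \<Phi> x s \<partial>M) - inner (\<integral>s. D\<Phi> x s \<partial>M) (y - x)\<bar> \<le> L / 2 * (norm (y - x))\<^sup>2"
proof -
  interpret prob_space M by (rule M)
  have i2: "integrable M (\<lambda>s. inner (D\<Phi> x s) (y - x))"
    by (intro integrable_inner_left dint)
  have "(\<integral>s. \<Phi> y s \<partial>M) - (\<integral>s. \<Phi> x s \<partial>M) - inner (\<integral>s. D\<Phi> x s \<partial>M) (y - x)
      = (\<integral>s. \<Phi> y s - \<Phi> x s - inner (D\<Phi> x s) (y - x) \<partial>M)"
    using int dint i2 by (simp add: integral_diff integral_inner_left)
  also have "\<bar>\<dots>\<bar> \<le> (\<integral>s. \<bar>\<Phi> y s - \<Phi> x s - inner (D\<Phi> x s) (y - x)\<bar> \<partial>M)"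
    by (rule integral_abs_bound)
  also have "\<dots> \<le> (\<integral>s. L / 2 * (norm (y - x))\<^sup>2 \<partial>M)"
    using int dint i2 quad by (intro integral_mono) auto
  also have "\<dots> = L / 2 * (norm (y - x))\<^sup>2" by (simp add: prob_space)
  finally show ?thesis .
qed

lemma integral_lipschitz:
  fixes D\<Phi> :: "'a::real_normed_vector \<Rightarrow> 'b \<Rightarrow> 'c::{banach, second_countable_topology}"
  assumes M: "prob_space M"
    and dint: "\<And>x. integrable M (D\<Phi> x)"
    and lip: "\<And>x y s. s \<in> space M \<Longrightarrow> norm (D\<Phi> x s - D\<Phi> y s) \<le> L * norm (x - y)"
  shows "norm ((\<integral>s. D\<Phi> x s \<partial>M) - (\<integral>s. D\<Phi> y s \<partial>M)) \<le> L * norm (x - y)"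
proof -
  interpret prob_space M by (rule M)
  have "norm ((\<integral>s. D\<Phi> x s \<partial>M) - (\<integral>s. D\<Phi> y s \<partial>M)) = norm (\<integral>s. D\<Phi> x s - D\<Phi> y s \<partial>M)"
    using dint by (simp add: integral_diff)
  also have "\<dots> \<le> (\<integral>s. norm (D\<Phi> x s - D\<Phi> y s) \<partial>M)" by (rule integral_norm_bound)
  also have "\<dots> \<le> (\<integral>s. L * norm (x - y) \<partial>M)"
    using dint lip by (intro integral_mono) auto
  also have "\<dots> = L * norm (x - y)" by (simp add: prob_space)
  finally show ?thesis .
qed

lemma norm_integral_le_of_norm_le:
  fixes D\<Phi> :: "'a \<Rightarrow> 'b::{banach, second_countable_topology}"
  assumes M: "prob_space M"
    and b: "\<And>s. s \<in> space M \<Longrightarrow> norm (D\<Phi> s) \<le> K"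
  shows "norm (\<integral>s. D\<Phi> s \<partial>M) \<le> K"
proof (cases "integrable M D\<Phi>")
  case True
  interpret prob_space M by (rule M)
  have "norm (\<integral>s. D\<Phi> s \<partial>M) \<le> (\<integral>s. norm (D\<Phi> s) \<partial>M)" by (rule integral_norm_bound)
  also have "\<dots> \<le> (\<integral>s. K \<partial>M)" using True b by (intro integral_mono) auto
  also have "\<dots> = K" by (simp add: prob_space)
  finally show ?thesis .
next
  case False
  interpret prob_space M by (rule M)
  obtain s where "s \<in> space M" using not_empty by blast
  then have "0 \<le> K" using b[of s] norm_ge_zero order_trans by blast
  then show ?thesis using False by (simp add: not_integrable_integral_eq)
qed

section \<open>The uniform distribution on the unit ball\<close>

lemma prob_space_unif_ball: "prob_space (unif_ball :: (real^'n) measure)"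
proof -
  have pos: "0 < measure lborel (ball (0::real^'n) 1)" by (rule content_ball_pos) simp
  have fin: "emeasure lborel (ball (0::real^'n) 1) < \<infinity>" by (rule emeasure_lborel_ball_finite)
  have "emeasure lborel (ball (0::real^'n) 1) = ennreal (measure lborel (ball (0::real^'n) 1))"
    using fin by (simp add: emeasure_eq_ennreal_measure)
  then have "emeasure lborel (ball (0::real^'n) 1) \<noteq> 0" using pos by simp
  then show ?thesis unfolding unif_ball_def using fin by (intro prob_space_uniform_measure) auto
qed

lemma sets_unif_ball[simp, measurable_cong]: "sets (unif_ball :: (real^'n) measure) = sets borel"
  by (simp add: unif_ball_def)

lemma space_unif_ball[simp]: "space (unif_ball :: (real^'n) measure) = UNIV"
  by (simp add: unif_ball_def)

lemma AE_unif_ball_norm_less: "AE v in (unif_ball :: (real^'n) measure). norm v < 1"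
  unfolding unif_ball_def by (rule AE_uniform_measureI) auto

lemma filterlim_one_over_Suc_at_0: "filterlim (\<lambda>n::nat. 1 / real (Suc n)) (at (0::real)) sequentially"
proof -
  have "(\<lambda>n::nat. 1 / real (Suc n)) \<longlonglongrightarrow> 0" by (rule LIMSEQ_Suc[OF lim_const_over_n]) 
  then show ?thesis unfolding filterlim_at by auto
qed

lemma le_grid_count:
  fixes r :: real and n :: nat
  assumes r: "0 \<le> r" "r < 1" and n: "0 < n"
  shows "r \<le> (1 / real n) * (\<Sum>j<n. if real j / real n \<le> r then 1 else 0)"
proof -
  define m where "m = nat \<lfloor>real n * r\<rfloor>"
  have fl0: "0 \<le> \<lfloor>real n * r\<rfloor>" using r by simp
  have nr: "real n * r < real n" using r n by simp
  have mn: "m < n"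
  proof -
    have "\<lfloor>real n * r\<rfloor> < int n" using nr by (simp add: floor_less_iff)
    then show ?thesis unfolding m_def using fl0 by linarith
  qed
  have iff: "real j / real n \<le> r \<longleftrightarrow> j \<le> m" for j
  proof -
    have "real j / real n \<le> r \<longleftrightarrow> real j \<le> real n * r" using n by (simp add: divide_le_eq mult.commute)
    also have "\<dots> \<longleftrightarrow> int j \<le> \<lfloor>real n * r\<rfloor>" by (simp add: le_floor_iff)
    also have "\<dots> \<longleftrightarrow> j \<le> m" unfolding m_def using fl0 by linarith
    finally show ?thesis .
  qed
  have "(\<Sum>j<n. if real j / real n \<le> r then 1 else (0::real)) = (\<Sum>j<n. if j \<le> m then 1 else 0)"
    using iff by simp
  also have "\<dots> = (\<Sum>j\<in>{j\<in>{..<n}. j \<le> m}. 1)"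
    by (subst sum.inter_filter) auto
  also have "{j\<in>{..<n}. j \<le> m} = {..m}" using mn by auto
  also have "(\<Sum>j\<in>{..m}. (1::real)) = real m + 1" by simp
  finally have s: "(\<Sum>j<n. if real j / real n \<le> r then 1 else (0::real)) = real m + 1" .
  have "real n * r < real m + 1"
  proof -
    have "real n * r < real_of_int \<lfloor>real n * r\<rfloor> + 1" by linarith
    then show ?thesis unfolding m_def using fl0 by simp
  qed
  then have "r \<le> (real m + 1) / real n" using n by (simp add: field_simps)
  then show ?thesis using s by simp
qed

lemma integrable_norm_unif_ball: "integrable (unif_ball :: (real^'n) measure) norm"
proof -
  interpret prob_space "unif_ball :: (real^'n) measure" by (rule prob_space_unif_ball)
  show ?thesis
    by (rule integrable_const_bound[where B = 1]) (use AE_unif_ball_norm_less in \<open>auto elim: AE_mp\<close>)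
qed

lemma measure_unif_ball_norm_ge:
  assumes r: "0 \<le> r" "r \<le> 1"
  shows "measure (unif_ball :: (real^'n) measure) {v. r \<le> norm v} = 1 - r ^ CARD('n)"
proof -
  define V where "V = measure lborel (ball (0::real^'n) 1)"
  have V_pos: "0 < V" unfolding V_def by (rule content_ball_pos) simp
  have fin: "emeasure lborel (ball (0::real^'n) 1) < \<infinity>" by (rule emeasure_lborel_ball_finite)
  have ne0: "emeasure lborel (ball (0::real^'n) 1) \<noteq> 0"
    using fin V_pos unfolding V_def by (simp add: emeasure_eq_ennreal_measure)
  have S: "{v::real^'n. r \<le> norm v} \<in> sets lborel" by measurable
  have "measure (unif_ball :: (real^'n) measure) {v. r \<le> norm v}
      = measure lborel (ball 0 1 \<inter> {v::real^'n. r \<le> norm v}) / V"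
    unfolding unif_ball_def V_def using fin ne0 S by (intro measure_uniform_measure) auto
  also have "ball 0 1 \<inter> {v::real^'n. r \<le> norm v} = ball 0 1 - ball 0 r" by auto
  also have "measure lborel (ball (0::real^'n) 1 - ball 0 r) = V - r ^ CARD('n) * V"
    unfolding V_def using content_ball_conv_unit_ball[of r "0::real^'n"] fin r
    by (subst measure_Diff) auto
  also have "(V - r ^ CARD('n) * V) / V = 1 - r ^ CARD('n)" using V_pos by (simp add: field_simps)
  finally show ?thesis .
qed

text \<open>A discretized layer-cake estimate: \<open>norm v\<close> is bounded by the average of the indicators
  of \<open>j / n \<le> norm v\<close>, whose probabilities are \<open>1 - (j / n) ^ d\<close>.\<close>

lemma integral_norm_unif_ball_le_grid:
  assumes n: "0 < n"
  shows "(\<integral>v. norm v \<partial>(unif_ball :: (real^'n) measure))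
    \<le> 1 / real n * (\<Sum>j<n. 1 - (real j / real n) ^ CARD('n))"
proof -
  let ?B = "unif_ball :: (real^'n) measure"
  interpret prob_space ?B by (rule prob_space_unif_ball)
  define A where "A j = {v::real^'n. real j / real n \<le> norm v}" for j
  have A_int: "integrable ?B (indicator (A j) :: real^'n \<Rightarrow> real)" for j
    unfolding A_def by (intro integrable_real_indicator) (auto simp: emeasure_eq_measure)
  have "(\<integral>v. norm v \<partial>?B) \<le> (\<integral>v. 1 / real n * (\<Sum>j<n. indicator (A j) v) \<partial>?B)"
  proof (rule integral_mono_AE[OF integrable_norm_unif_ball])
    show "integrable ?B (\<lambda>v. 1 / real n * (\<Sum>j<n. indicator (A j) v))"
      by (intro integrable_mult_right Bochner_Integration.integrable_sum A_int)
    show "AE v in ?B. norm v \<le> 1 / real n * (\<Sum>j<n. indicator (A j) v)"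
      using AE_unif_ball_norm_less
    proof eventually_elim
      case (elim v)
      have "norm v \<le> 1 / real n * (\<Sum>j<n. if real j / real n \<le> norm v then 1 else 0)"
        by (rule le_grid_count) (use elim n in auto)
      then show ?case by (simp add: A_def indicator_def of_bool_def)
    qed
  qed
  also have "\<dots> = 1 / real n * (\<Sum>j<n. measure ?B (A j))"
    using A_int by (simp add: Bochner_Integration.integral_sum)
  also have "\<dots> = 1 / real n * (\<Sum>j<n. 1 - (real j / real n) ^ CARD('n))"
    unfolding A_def using n by (intro arg_cong2[where f = "(*)"] refl sum.cong measure_unif_ball_norm_ge) auto
  finally show ?thesis .
qed

lemma integral_norm_unif_ball_bound:
  "3 * (\<integral>v. norm v \<partial>(unif_ball :: (real^'n) measure))\<^sup>2 \<le> (real CARD('n))\<^sup>2"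
proof -
  define E where "E = (\<integral>v. norm v \<partial>(unif_ball :: (real^'n) measure))"
  have E_nonneg: "0 \<le> E" unfolding E_def by (rule integral_nonneg_AE) auto
  show ?thesis
  proof (cases "CARD('n) = 1")
    case True
    have "E \<le> 11/20"
      using integral_norm_unif_ball_le_grid[where 'n = 'n, of 10] True
      by (simp add: E_def eval_nat_numeral)
    then have "E\<^sup>2 \<le> (11/20)\<^sup>2" using E_nonneg by (intro power_mono) auto
    then show ?thesis using True by (simp add: E_def power2_eq_square)
  next
    case False
    then have "2 \<le> CARD('n)" using zero_less_card_finite[where 'a = 'n] by linarith
    then have "(2::real)\<^sup>2 \<le> (real CARD('n))\<^sup>2" by (intro power_mono) auto
    moreover have "E \<le> 1"
      using integral_norm_unif_ball_le_grid[where 'n = 'n, of 1] by (simp add: E_def zero_power)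
    then have "E\<^sup>2 \<le> 1" using E_nonneg by (simp add: power_le_one)
    ultimately show ?thesis by (simp add: E_def)
  qed
qed

section \<open>The stochastic objective and its smoothing\<close>

locale zo_objective =
  fixes F :: "real^'n \<Rightarrow> 's \<Rightarrow> real" and P :: "'s measure" and L \<eta> :: real
  assumes P: "prob_space P"
    and F_meas: "(\<lambda>(x, s). F x s) \<in> borel_measurable (borel \<Otimes>\<^sub>M P)"
    and F_int: "\<And>x. integrable P (F x)"
    and A1_diff: "\<And>s x. s \<in> space P \<Longrightarrow> (\<lambda>z. F z s) differentiable (at x)"
    and A1_lip: "\<And>s x y. s \<in> space P \<Longrightarrow>
                   norm (grad (\<lambda>z. F z s) x - grad (\<lambda>z. F z s) y) \<le> L * norm (x - y)"
    and A2: "\<And>s x. s \<in> space P \<Longrightarrow> infnorm (grad (\<lambda>z. F z s) x) \<le> \<eta>"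
    and L_pos: "0 < L"
begin

definition "DF x s = grad (\<lambda>z. F z s) x"
definition "f x = (\<integral>s. F x s \<partial>P)"
definition "Gf x = (\<integral>s. DF x s \<partial>P)"

lemma DF_has_derivative: "s \<in> space P \<Longrightarrow> ((\<lambda>z. F z s) has_derivative (\<lambda>h. inner h (DF x s))) (at x)"
  unfolding DF_def by (rule has_derivative_grad[OF A1_diff])

lemma DF_quadratic_bound:
  assumes s: "s \<in> space P"
  shows "\<bar>F y s - F x s - inner (DF x s) (y - x)\<bar> \<le> L / 2 * (norm (y - x))\<^sup>2"
  by (rule lipschitz_grad_quadratic_bound[where D = "\<lambda>x. DF x s"])
    (use s in \<open>auto simp: DF_has_derivative A1_lip[unfolded DF_def[symmetric]]\<close>)

lemma norm_DF_le: "s \<in> space P \<Longrightarrow> norm (DF x s) \<le> real CARD('n) * \<eta>"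
proof -
  assume s: "s \<in> space P"
  have "norm (DF x s) \<le> (\<Sum>i\<in>UNIV. \<bar>DF x s $ i\<bar>)" by (rule norm_le_l1_cart)
  also have "\<dots> \<le> (\<Sum>i\<in>(UNIV::'n set). \<eta>)"
    unfolding DF_def by (intro sum_mono order_trans[OF component_le_infnorm_cart A2[OF s]])
  finally show ?thesis by simp
qed

lemma F_measurable: "F y \<in> borel_measurable P"
  using measurable_compose[OF measurable_Pair1'[of y borel P] F_meas] by simp

lemma DF_measurable: "(\<lambda>s. DF x s) \<in> borel_measurable P"
proof -
  have "(\<lambda>s. DF x s $ i) \<in> borel_measurable P" for i
  proof (rule borel_measurable_LIMSEQ_real[where u="\<lambda>n s. (F (x + (1 / real (Suc n)) *\<^sub>R axis i 1) s - F x s) / (1 / real (Suc n))"])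
    fix s assume s: "s \<in> space P"
    have "((\<lambda>t. F (x + t *\<^sub>R axis i 1) s) has_real_derivative inner (axis i 1) (DF (x + 0 *\<^sub>R axis i 1) s)) (at 0)"
      by (rule has_real_derivative_along_line[OF DF_has_derivative[OF s]])
    then have "((\<lambda>h. (F (x + (0 + h) *\<^sub>R axis i 1) s - F (x + 0 *\<^sub>R axis i 1) s) / h) \<longlongrightarrow> DF x s $ i) (at 0)"
      unfolding DERIV_def by (simp add: inner_axis')
    then have "((\<lambda>h. (F (x + h *\<^sub>R axis i 1) s - F x s) / h) \<longlongrightarrow> DF x s $ i) (at 0)" by simp
    from filterlim_compose[OF this filterlim_one_over_Suc_at_0]
    show "(\<lambda>n. (F (x + (1 / real (Suc n)) *\<^sub>R axis i 1) s - F x s) / (1 / real (Suc n))) \<longlonglongrightarrow> DF x s $ i" .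
  next
    fix n
    show "(\<lambda>s. (F (x + (1 / real (Suc n)) *\<^sub>R axis i 1) s - F x s) / (1 / real (Suc n))) \<in> borel_measurable P"
      using F_measurable by measurable
  qed
  then show ?thesis
    by (subst borel_measurable_euclidean_space) (auto simp: Basis_vec_def cart_eq_inner_axis[symmetric])
qed

lemma DF_integrable: "integrable P (DF x)"
proof -
  interpret prob_space P by (rule P)
  show ?thesis
    by (rule integrable_const_bound[where B="real CARD('n) * \<eta>"]) (auto intro!: AE_I2 norm_DF_le DF_measurable)
qed

lemma f_quadratic_bound: "\<bar>f y - f x - inner (Gf x) (y - x)\<bar> \<le> L / 2 * (norm (y - x))\<^sup>2"
  unfolding f_def Gf_def by (rule integral_quadratic_bound[OF P F_int DF_integrable DF_quadratic_bound])

lemma Gf_lipschitz: "norm (Gf x - Gf y) \<le> L * norm (x - y)"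
  unfolding Gf_def by (rule integral_lipschitz[OF P DF_integrable]) (simp add: DF_def A1_lip)

lemma norm_Gf_le: "norm (Gf x) \<le> real CARD('n) * \<eta>"
  unfolding Gf_def by (rule norm_integral_le_of_norm_le[OF P norm_DF_le])

lemma f_has_derivative: "(f has_derivative (\<lambda>h. inner h (Gf x))) (at x)"
  by (rule has_derivative_of_quadratic_bound[OF f_quadratic_bound])

lemma grad_f_eq: "grad f x = Gf x"
  by (rule grad_eqI[OF f_has_derivative])

lemma f_measurable[measurable]: "f \<in> borel_measurable borel"
  by (intro borel_measurable_continuous_onI continuous_at_imp_continuous_on ballI
      has_derivative_continuous[OF f_has_derivative])

lemma Gf_measurable[measurable]: "Gf \<in> borel_measurable borel"
proof -
  have "L-lipschitz_on UNIV Gf"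
    using L_pos Gf_lipschitz by (auto simp: lipschitz_on_def dist_norm)
  then show ?thesis by (intro borel_measurable_continuous_onI lipschitz_on_continuous_on)
qed

definition "Gm \<mu> x = (\<integral>v. Gf (x + \<mu> *\<^sub>R v) \<partial>unif_ball)"

lemma integrable_f_shift: "integrable unif_ball (\<lambda>v. f (x + \<mu> *\<^sub>R v))"
proof -
  interpret prob_space unif_ball by (rule prob_space_unif_ball)
  have "AE v in unif_ball. norm (f (x + \<mu> *\<^sub>R v)) \<le> \<bar>f x\<bar> + norm (Gf x) * \<bar>\<mu>\<bar> + L / 2 * \<mu>\<^sup>2"
    using AE_unif_ball_norm_less
  proof eventually_elim
    case (elim v)
    have q: "\<bar>f (x + \<mu> *\<^sub>R v) - f x - inner (Gf x) (\<mu> *\<^sub>R v)\<bar> \<le> L / 2 * (norm (\<mu> *\<^sub>R v))\<^sup>2"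
      using f_quadratic_bound[of "x + \<mu> *\<^sub>R v" x] by simp
    have i: "\<bar>inner (Gf x) (\<mu> *\<^sub>R v)\<bar> \<le> norm (Gf x) * \<bar>\<mu>\<bar>"
    proof -
      have "\<bar>inner (Gf x) (\<mu> *\<^sub>R v)\<bar> \<le> norm (Gf x) * norm (\<mu> *\<^sub>R v)" by (rule Cauchy_Schwarz_ineq2)
      also have "\<dots> \<le> norm (Gf x) * \<bar>\<mu>\<bar>" using elim by (intro mult_left_mono) (auto intro: mult_left_le)
      finally show ?thesis .
    qed
    have n: "(norm (\<mu> *\<^sub>R v))\<^sup>2 \<le> \<mu>\<^sup>2"
    proof -
      have "norm (\<mu> *\<^sub>R v) \<le> \<bar>\<mu>\<bar>" using elim by (auto intro: mult_left_le)
      then have "(norm (\<mu> *\<^sub>R v))\<^sup>2 \<le> \<bar>\<mu>\<bar>^2" by (intro power_mono) auto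
      then show ?thesis by simp
    qed
    have nn: "L / 2 * (norm (\<mu> *\<^sub>R v))\<^sup>2 \<le> L / 2 * \<mu>\<^sup>2" using n L_pos by (intro mult_left_mono) auto
    show ?case using q i nn by (simp only: real_norm_def)
  qed
  then show ?thesis by (intro integrable_const_bound) auto
qed

lemma integrable_Gf_shift: "integrable unif_ball (\<lambda>v. Gf (x + \<mu> *\<^sub>R v))"
proof -
  interpret prob_space unif_ball by (rule prob_space_unif_ball)
  show ?thesis
    by (rule integrable_const_bound[where B="real CARD('n) * \<eta>"]) (auto intro!: AE_I2 norm_Gf_le)
qed

lemma smooth_quadratic_bound: "\<bar>smooth f \<mu> y - smooth f \<mu> x - inner (Gm \<mu> x) (y - x)\<bar> \<le> L / 2 * (norm (y - x))\<^sup>2"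
  unfolding smooth_def Gm_def
proof (rule integral_quadratic_bound[OF prob_space_unif_ball integrable_f_shift integrable_Gf_shift])
  fix x y v
  show "\<bar>f (y + \<mu> *\<^sub>R v) - f (x + \<mu> *\<^sub>R v) - inner (Gf (x + \<mu> *\<^sub>R v)) (y - x)\<bar> \<le> L / 2 * (norm (y - x))\<^sup>2"
    using f_quadratic_bound[of "y + \<mu> *\<^sub>R v" "x + \<mu> *\<^sub>R v"] by simp
qed

lemma Gm_lipschitz: "norm (Gm \<mu> x - Gm \<mu> y) \<le> L * norm (x - y)"
  unfolding Gm_def
  by (rule integral_lipschitz[OF prob_space_unif_ball integrable_Gf_shift]) (use Gf_lipschitz in \<open>metis add_diff_cancel_right\<close>)

lemma norm_Gm_le: "norm (Gm \<mu> x) \<le> real CARD('n) * \<eta>"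
  unfolding Gm_def by (rule norm_integral_le_of_norm_le[OF prob_space_unif_ball norm_Gf_le])

lemma grad_smooth_eq: "grad (smooth f \<mu>) x = Gm \<mu> x"
  by (rule grad_eqI[OF has_derivative_of_quadratic_bound[OF smooth_quadratic_bound]])

lemma smooth_descent: "smooth f \<mu> y \<le> smooth f \<mu> x + inner (Gm \<mu> x) (y - x) + L / 2 * (norm (y - x))\<^sup>2"
proof -
  have "smooth f \<mu> y - smooth f \<mu> x - inner (Gm \<mu> x) (y - x) \<le> L / 2 * (norm (y - x))\<^sup>2"
    using smooth_quadratic_bound[of \<mu> y x] abs_ge_self order_trans by blast
  then show ?thesis by simp
qed

lemma Gm_measurable[measurable]: "Gm \<mu> \<in> borel_measurable borel"
proof -
  have "L-lipschitz_on UNIV (Gm \<mu>)"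
    using L_pos Gm_lipschitz by (auto simp: lipschitz_on_def dist_norm)
  then show ?thesis by (intro borel_measurable_continuous_onI lipschitz_on_continuous_on)
qed

lemma norm_Gf_minus_Gm_le: "norm (Gf x - Gm \<mu> x) \<le> L * \<bar>\<mu>\<bar> * (\<integral>v. norm v \<partial>(unif_ball :: (real^'n) measure))"
proof -
  interpret prob_space "unif_ball :: (real^'n) measure" by (rule prob_space_unif_ball)
  have "Gf x - Gm \<mu> x = (\<integral>v. Gf x - Gf (x + \<mu> *\<^sub>R v) \<partial>unif_ball)"
  proof -
    have "prob UNIV = 1" using prob_space by simp
    then show ?thesis unfolding Gm_def using integrable_Gf_shift by (simp add: integral_diff)
  qed
  then have "norm (Gf x - Gm \<mu> x) \<le> (\<integral>v. norm (Gf x - Gf (x + \<mu> *\<^sub>R v)) \<partial>unif_ball)"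
    by (simp add: integral_norm_bound)
  also have "\<dots> \<le> (\<integral>v. L * \<bar>\<mu>\<bar> * norm v \<partial>(unif_ball :: (real^'n) measure))"
  proof (rule integral_mono)
    show "integrable unif_ball (\<lambda>v. norm (Gf x - Gf (x + \<mu> *\<^sub>R v)))"
      using integrable_Gf_shift by (intro integrable_norm integrable_diff) auto
    show "integrable (unif_ball :: (real^'n) measure) (\<lambda>v. L * \<bar>\<mu>\<bar> * norm v)"
      by (intro integrable_mult_right integrable_norm_unif_ball)
    fix v
    show "norm (Gf x - Gf (x + \<mu> *\<^sub>R v)) \<le> L * \<bar>\<mu>\<bar> * norm v"
      using Gf_lipschitz[of x "x + \<mu> *\<^sub>R v"] by (simp add: mult.assoc)
  qed
  also have "\<dots> = L * \<bar>\<mu>\<bar> * (\<integral>v. norm v \<partial>(unif_ball :: (real^'n) measure))" by simp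
  finally show ?thesis .
qed

lemma norm_Gf_minus_Gm_power2_le: "(norm (Gf x - Gm \<mu> x))\<^sup>2 \<le> L\<^sup>2 * \<mu>\<^sup>2 * (real CARD('n))\<^sup>2 / 3"
proof -
  define E where "E = (\<integral>v. norm v \<partial>(unif_ball :: (real^'n) measure))"
  have "(norm (Gf x - Gm \<mu> x))\<^sup>2 \<le> (L * \<bar>\<mu>\<bar> * E)\<^sup>2"
    using norm_Gf_minus_Gm_le[of x \<mu>] by (intro power_mono) (auto simp: E_def)
  also have "\<dots> = L\<^sup>2 * \<mu>\<^sup>2 * (3 * E\<^sup>2) / 3" by (simp add: power_mult_distrib)
  also have "\<dots> \<le> L\<^sup>2 * \<mu>\<^sup>2 * (real CARD('n))\<^sup>2 / 3"
    using integral_norm_unif_ball_bound[where 'n = 'n] unfolding E_def[symmetric]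
    by (intro divide_right_mono mult_left_mono) auto
  finally show ?thesis .
qed

end

section \<open>Measurability and independence\<close>

lemma norm_vec_mult_le: "norm (\<chi> i. u$i * v$i) \<le> norm u * norm (v::real^'n)"
proof -
  have "(norm (\<chi> i. u$i * v$i))\<^sup>2 = (\<Sum>i\<in>UNIV. (u$i)\<^sup>2 * (v$i)\<^sup>2)"
    by (simp add: norm_power2_vec_sum power_mult_distrib)
  also have "\<dots> \<le> (\<Sum>i\<in>UNIV. (u$i)\<^sup>2 * (norm v)\<^sup>2)"
    using component_le_norm_cart[of v]
    by (intro sum_mono mult_left_mono) (auto simp: abs_le_square_iff[symmetric])
  also have "\<dots> = (norm u * norm v)\<^sup>2"
    by (simp add: norm_power2_vec_sum sum_distrib_right power_mult_distrib)
  finally show ?thesis by (rule power2_le_imp_le) simp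
qed

lemma norm_wproj_diff_le:
  fixes h1 h2 b1 b2 :: "real^'n"
  assumes h1: "\<forall>i. c \<le> h1$i" and h2: "\<forall>i. c \<le> h2$i" and c: "0 < c"
    and X: "closed X" "convex X" "X \<noteq> {}"
  shows "norm (wproj X h1 b1 - wproj X h2 b2)
    \<le> (norm (h2 - h1) * norm (wproj X h2 b2 - b2) + norm h1 * norm (b1 - b2)) / c"
proof -
  define y1 y2 where "y1 = wproj X h1 b1" and "y2 = wproj X h2 b2"
  define \<delta> where "\<delta> = y1 - y2"
  define r where "r = (\<chi> i. (h2 - h1)$i * (y2 - b2)$i) + (\<chi> i. h1$i * (b1 - b2)$i)"
  have h1_pos: "\<forall>i. 0 < h1$i" using h1 c by (auto intro: less_le_trans)
  have h2_pos: "\<forall>i. 0 < h2$i" using h2 c by (auto intro: less_le_trans)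
  have y1_X: "y1 \<in> X" and y2_X: "y2 \<in> X"
    unfolding y1_def y2_def by (intro wproj_minimal(1) h1_pos h2_pos X)+
  have "inner r \<delta> - (hnorm h1 \<delta>)\<^sup>2
      = (\<Sum>i\<in>UNIV. h1$i * (y1$i - b1$i) * (y2$i - y1$i)) + (\<Sum>i\<in>UNIV. h2$i * (y2$i - b2$i) * (y1$i - y2$i))"
    unfolding \<delta>_def r_def hnorm_power2[OF h1_pos] inner_vec_sum
    by (simp add: sum_subtractf[symmetric] sum.distrib[symmetric] power2_eq_square algebra_simps)
  moreover have "0 \<le> (\<Sum>i\<in>UNIV. h1$i * (y1$i - b1$i) * (y2$i - y1$i))"
    unfolding y1_def by (rule wproj_VI[OF h1_pos X(1,2) y2_X])
  moreover have "0 \<le> (\<Sum>i\<in>UNIV. h2$i * (y2$i - b2$i) * (y1$i - y2$i))"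
    unfolding y2_def by (rule wproj_VI[OF h2_pos X(1,2) y1_X])
  moreover have "inner r \<delta> \<le> (norm (h2 - h1) * norm (y2 - b2) + norm h1 * norm (b1 - b2)) * norm \<delta>"
    unfolding r_def
    by (intro order_trans[OF norm_cauchy_schwarz] mult_right_mono order_trans[OF norm_triangle_ineq]
        add_mono norm_vec_mult_le) simp
  ultimately have "c * (norm \<delta>)\<^sup>2 \<le> (norm (h2 - h1) * norm (y2 - b2) + norm h1 * norm (b1 - b2)) * norm \<delta>"
    using hnorm_power2_ge[OF h1 c, of \<delta>] by linarith
  then have "c * norm \<delta> \<le> norm (h2 - h1) * norm (y2 - b2) + norm h1 * norm (b1 - b2)"
    by (cases "norm \<delta> = 0") (auto simp: power2_eq_square)
  then show ?thesis using c by (simp add: \<delta>_def y1_def y2_def field_simps)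
qed

definition clamp_below :: "real \<Rightarrow> real^'n \<Rightarrow> real^'n" where
  "clamp_below c h = (\<chi> i. max (h$i) c)"

text \<open>Clamping the weights from below makes the weighted projection jointly continuous on the
  whole space, which is all the measurability arguments need.\<close>

lemma continuous_on_wproj_clamp_below:
  assumes c: "0 < c" and X: "closed X" "convex X" "X \<noteq> {}"
  shows "continuous_on UNIV (\<lambda>p::(real^'n) \<times> (real^'n). wproj X (clamp_below c (fst p)) (snd p))"
proof (rule continuous_at_imp_continuous_on, intro ballI)
  fix p0 :: "(real^'n) \<times> (real^'n)"
  obtain h0 b0 where p0: "p0 = (h0, b0)" by fastforce
  define W where "W p = wproj X (clamp_below c (fst p)) (snd p)" for p :: "(real^'n) \<times> (real^'n)"
  define K where "K = norm (W p0 - b0)"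
  define g where "g p = (norm (clamp_below c h0 - clamp_below c (fst p)) * K
    + norm (clamp_below c (fst p)) * norm (snd p - b0)) / c" for p :: "(real^'n) \<times> (real^'n)"
  have clamp_ge: "\<forall>i. c \<le> clamp_below c h $ i" for h :: "real^'n"
    by (simp add: clamp_below_def)
  have "continuous_on UNIV (clamp_below c :: real^'n \<Rightarrow> real^'n)"
    unfolding clamp_below_def by (intro continuous_intros)
  then have "isCont (clamp_below c) h0" by (simp add: continuous_on_eq_continuous_at)
  moreover have "(fst \<longlongrightarrow> h0) (at (h0, b0))"
    using tendsto_fst[OF tendsto_ident_at[of "(h0, b0)" UNIV]] by simp
  ultimately have "((\<lambda>p. clamp_below c (fst p)) \<longlongrightarrow> clamp_below c h0) (at (h0, b0))"
    by (rule isCont_tendsto_compose)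
  then have "(g \<longlongrightarrow> g p0) (at p0)"
    unfolding g_def p0 using c by (intro tendsto_intros tendsto_snd tendsto_ident_at) auto
  then have g_0: "(g \<longlongrightarrow> 0) (at p0)" by (simp add: g_def p0)
  have "norm (W p - W p0) \<le> g p" for p
    unfolding W_def g_def K_def p0 fst_conv snd_conv
    by (rule norm_wproj_diff_le[OF clamp_ge clamp_ge c X])
  then have "((\<lambda>p. W p - W p0) \<longlongrightarrow> 0) (at p0)"
    by (intro Lim_null_comparison[OF _ g_0] always_eventually allI)
  then show "isCont W p0" by (simp add: isCont_def LIM_zero_iff)
qed

lemma borel_measurable_wproj:
  fixes h b :: "'a \<Rightarrow> real^'n"
  assumes c: "0 < c" and X: "closed X" "convex X" "X \<noteq> {}"
    and meas: "h \<in> borel_measurable M" "b \<in> borel_measurable M"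
    and hc: "\<And>w. w \<in> space M \<Longrightarrow> \<forall>i. c \<le> h w $ i"
  shows "(\<lambda>w. wproj X (h w) (b w)) \<in> borel_measurable M"
proof -
  have "(\<lambda>w. wproj X (clamp_below c (h w)) (b w)) \<in> borel_measurable M"
    using borel_measurable_continuous_Pair[OF meas continuous_on_wproj_clamp_below[OF c X]] by simp
  moreover have "clamp_below c (h w) = h w" if "w \<in> space M" for w
    using hc[OF that] unfolding clamp_below_def by (intro iffD2[OF vec_eq_iff] allI) simp
  ultimately show ?thesis by (metis (no_types, lifting) measurable_cong)
qed

lemma borel_measurable_vec_nth[measurable (raw)]:
  "f \<in> borel_measurable M \<Longrightarrow> (\<lambda>x. f x $ i :: real) \<in> borel_measurable M"
  using measurable_compose[OF _ borel_measurable_nth] .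

lemma borel_measurable_vec_lambda[measurable (raw)]:
  fixes g :: "'n::finite \<Rightarrow> 'a \<Rightarrow> real"
  shows "(\<And>i. (\<lambda>x. g i x) \<in> borel_measurable M) \<Longrightarrow> (\<lambda>x. \<chi> i. g i x) \<in> borel_measurable M"
  by (subst borel_measurable_euclidean_space) (auto simp: Basis_vec_def inner_axis)

lemma integrable_bounded_prob:
  fixes f :: "'a \<Rightarrow> real"
  assumes "prob_space M" "f \<in> borel_measurable M" "\<And>x. x \<in> space M \<Longrightarrow> \<bar>f x\<bar> \<le> K"
  shows "integrable M f"
proof -
  interpret prob_space M by fact
  show ?thesis by (rule integrable_const_bound[where B = K]) (use assms in auto)
qed

lemma integral_pair_mult:
  fixes g :: "'b \<Rightarrow> real" and \<phi> :: "'c \<Rightarrow> real"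
  assumes B: "prob_space B" and U: "prob_space U"
    and g: "g \<in> borel_measurable B" "\<And>y. y \<in> space B \<Longrightarrow> \<bar>g y\<bar> \<le> K"
    and \<phi>: "\<phi> \<in> borel_measurable U" "\<And>r. r \<in> space U \<Longrightarrow> \<bar>\<phi> r\<bar> \<le> K'"
  shows "(\<integral>z. g (fst z) * \<phi> (snd z) \<partial>(B \<Otimes>\<^sub>M U)) = (\<integral>y. g y \<partial>B) * (\<integral>r. \<phi> r \<partial>U)"
proof -
  interpret B: prob_space B by (rule B)
  interpret U: prob_space U by (rule U)
  interpret BU: pair_prob_space B U by unfold_locales
  have "integrable (B \<Otimes>\<^sub>M U) (\<lambda>z. g (fst z) * \<phi> (snd z))"
  proof (rule integrable_bounded_prob[where K = "K * K'"])
    show "prob_space (B \<Otimes>\<^sub>M U)" by (rule prob_space_pair[OF B U])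
    show "(\<lambda>z. g (fst z) * \<phi> (snd z)) \<in> borel_measurable (B \<Otimes>\<^sub>M U)"
      using g(1) \<phi>(1) by measurable
    fix z assume "z \<in> space (B \<Otimes>\<^sub>M U)"
    then have "fst z \<in> space B" "snd z \<in> space U" by (auto simp: space_pair_measure)
    then show "\<bar>g (fst z) * \<phi> (snd z)\<bar> \<le> K * K'"
      using g(2) \<phi>(2) by (simp add: abs_mult mult_mono' order_trans[OF abs_ge_zero])
  qed
  then show ?thesis using BU.integral_fst'[of "\<lambda>z. g (fst z) * \<phi> (snd z)"] by simp
qed

lemma integral_mult_indep_last:
  fixes G :: "'a \<times> 'b \<times> 'c \<Rightarrow> real" and \<psi> :: "'c \<Rightarrow> real"
  assumes A: "prob_space A" and B: "prob_space B" and U: "prob_space U"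
    and G: "G \<in> borel_measurable (A \<Otimes>\<^sub>M (B \<Otimes>\<^sub>M U))"
      "\<And>w. w \<in> space (A \<Otimes>\<^sub>M (B \<Otimes>\<^sub>M U)) \<Longrightarrow> \<bar>G w\<bar> \<le> K"
    and G_indep: "\<And>x y r r'. G (x, y, r) = G (x, y, r')"
    and \<psi>: "\<psi> \<in> borel_measurable U" "\<And>r. r \<in> space U \<Longrightarrow> \<bar>\<psi> r\<bar> \<le> K'"
  shows "(\<integral>w. G w * \<psi> (snd (snd w)) \<partial>(A \<Otimes>\<^sub>M (B \<Otimes>\<^sub>M U)))
    = (\<integral>w. G w \<partial>(A \<Otimes>\<^sub>M (B \<Otimes>\<^sub>M U))) * (\<integral>r. \<psi> r \<partial>U)"
proof -
  interpret A: prob_space A by (rule A)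
  interpret U: prob_space U by (rule U)
  have BU: "prob_space (B \<Otimes>\<^sub>M U)" by (rule prob_space_pair[OF B U])
  interpret ABU: pair_prob_space A "B \<Otimes>\<^sub>M U"
    using A BU by (simp add: pair_prob_space_def pair_sigma_finite_def prob_space_imp_sigma_finite)
  obtain r0 where r0: "r0 \<in> space U" using U.not_empty by blast
  have G_section: "(\<lambda>y. G (x, y, r0)) \<in> borel_measurable B" if "x \<in> space A" for x
    using measurable_compose[OF _ G(1), of "\<lambda>y. (x, y, r0)"] that r0 by measurable
  have fibre: "(\<integral>z. G (x, z) * \<phi> (snd z) \<partial>(B \<Otimes>\<^sub>M U)) = (\<integral>y. G (x, y, r0) \<partial>B) * (\<integral>r. \<phi> r \<partial>U)"
    if x: "x \<in> space A" and \<phi>: "\<phi> \<in> borel_measurable U" "\<And>r. r \<in> space U \<Longrightarrow> \<bar>\<phi> r\<bar> \<le> K\<phi>"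
    for x \<phi> K\<phi>
  proof -
    have "(\<integral>z. G (x, z) * \<phi> (snd z) \<partial>(B \<Otimes>\<^sub>M U)) = (\<integral>z. G (x, fst z, r0) * \<phi> (snd z) \<partial>(B \<Otimes>\<^sub>M U))"
      by (intro Bochner_Integration.integral_cong refl) (metis G_indep prod.collapse)
    also have "\<dots> = (\<integral>y. G (x, y, r0) \<partial>B) * (\<integral>r. \<phi> r \<partial>U)"
      using x r0 by (intro integral_pair_mult[OF B U G_section[OF x] _ \<phi>, where K = K] G(2)) (auto simp: space_pair_measure)
    finally show ?thesis .
  qed
  have int: "integrable (A \<Otimes>\<^sub>M (B \<Otimes>\<^sub>M U)) (\<lambda>w. G w * \<phi> (snd (snd w)))"
    if "\<phi> \<in> borel_measurable U" "\<And>r. r \<in> space U \<Longrightarrow> \<bar>\<phi> r\<bar> \<le> K\<phi>" for \<phi> K\<phi>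
  proof (rule integrable_bounded_prob[where K = "K * K\<phi>"])
    show "prob_space (A \<Otimes>\<^sub>M (B \<Otimes>\<^sub>M U))" by (rule prob_space_pair[OF A BU])
    show "(\<lambda>w. G w * \<phi> (snd (snd w))) \<in> borel_measurable (A \<Otimes>\<^sub>M (B \<Otimes>\<^sub>M U))"
      using G(1) that(1) by measurable
    fix w assume w: "w \<in> space (A \<Otimes>\<^sub>M (B \<Otimes>\<^sub>M U))"
    then have "snd (snd w) \<in> space U" by (auto simp: space_pair_measure)
    then show "\<bar>G w * \<phi> (snd (snd w))\<bar> \<le> K * K\<phi>"
      using G(2)[OF w] that(2) by (simp add: abs_mult mult_mono' order_trans[OF abs_ge_zero])
  qed
  have expand: "(\<integral>w. G w * \<phi> (snd (snd w)) \<partial>(A \<Otimes>\<^sub>M (B \<Otimes>\<^sub>M U)))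
      = (\<integral>x. (\<integral>y. G (x, y, r0) \<partial>B) \<partial>A) * (\<integral>r. \<phi> r \<partial>U)"
    if "\<phi> \<in> borel_measurable U" "\<And>r. r \<in> space U \<Longrightarrow> \<bar>\<phi> r\<bar> \<le> K\<phi>" for \<phi> K\<phi>
    using ABU.integral_fst'[OF int[OF that]] fibre[OF _ that] by (simp cong: Bochner_Integration.integral_cong)
  have "(\<integral>w. G w \<partial>(A \<Otimes>\<^sub>M (B \<Otimes>\<^sub>M U))) = (\<integral>x. (\<integral>y. G (x, y, r0) \<partial>B) \<partial>A)"
    using expand[of "\<lambda>_. 1" 1] by (simp add: U.prob_space)
  then show ?thesis using expand[OF \<psi>] by simp
qed

lemma integral_uniform_index:
  fixes G :: "'i \<Rightarrow> 'a \<times> 'b \<times> 'i \<Rightarrow> real"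
    and A :: "'a measure" and B :: "'b measure" and S :: "'i set"
  defines "M \<equiv> A \<Otimes>\<^sub>M (B \<Otimes>\<^sub>M uniform_count_measure S)"
  assumes A: "prob_space A" and B: "prob_space B" and S: "finite S" "S \<noteq> {}"
    and G: "\<And>t. t \<in> S \<Longrightarrow> G t \<in> borel_measurable M"
      "\<And>t w. t \<in> S \<Longrightarrow> w \<in> space M \<Longrightarrow> \<bar>G t w\<bar> \<le> K"
    and G_indep: "\<And>t x y r r'. G t (x, y, r) = G t (x, y, r')"
  shows "(\<integral>w. G (snd (snd w)) w \<partial>M) = (\<Sum>t\<in>S. \<integral>w. G t w \<partial>M) / card S"
proof -
  let ?U = "uniform_count_measure S"
  have U: "prob_space ?U" by (rule prob_space_uniform_count_measure[OF S])
  have M: "prob_space M" unfolding M_def by (intro prob_space_pair A B U)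
  have index_S: "snd (snd w) \<in> S" if "w \<in> space M" for w
    using that by (auto simp: M_def space_pair_measure space_uniform_count_measure)
  have ind_meas: "(indicator {t} :: 'i \<Rightarrow> real) \<in> borel_measurable ?U" for t
    by (simp add: measurable_cong_sets[OF sets_uniform_count_measure_count_space refl])
  have "(\<integral>w. G (snd (snd w)) w \<partial>M) = (\<integral>w. (\<Sum>t\<in>S. G t w * indicator {t} (snd (snd w))) \<partial>M)"
  proof (rule Bochner_Integration.integral_cong[OF refl])
    fix w assume "w \<in> space M"
    have "(\<Sum>t\<in>S. G t w * indicator {t} (snd (snd w))) = (\<Sum>t\<in>S. if t = snd (snd w) then G t w else 0)"
      by (intro sum.cong) (auto simp: indicator_def)
    also have "\<dots> = G (snd (snd w)) w"
      using index_S[OF \<open>w \<in> space M\<close>] S(1) by (simp add: sum.delta)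
    finally show "G (snd (snd w)) w = (\<Sum>t\<in>S. G t w * indicator {t} (snd (snd w)))" ..
  qed
  also have "\<dots> = (\<Sum>t\<in>S. \<integral>w. G t w * indicator {t} (snd (snd w)) \<partial>M)"
  proof (rule Bochner_Integration.integral_sum)
    fix t assume t: "t \<in> S"
    show "integrable M (\<lambda>w. G t w * indicator {t} (snd (snd w)))"
    proof (rule integrable_bounded_prob[OF M, where K = K])
      show "(\<lambda>w. G t w * indicator {t} (snd (snd w))) \<in> borel_measurable M"
        using G(1)[OF t] ind_meas[of t] unfolding M_def by measurable
    qed (use G(2)[OF t] in \<open>auto simp: indicator_def intro: order_trans[OF abs_ge_zero]\<close>)
  qed
  also have "\<dots> = (\<Sum>t\<in>S. (\<integral>w. G t w \<partial>M) * (1 / card S))"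
  proof (rule sum.cong[OF refl])
    fix t assume t: "t \<in> S"
    have "(\<integral>w. G t w * indicator {t} (snd (snd w)) \<partial>M) = (\<integral>w. G t w \<partial>M) * (\<integral>r. indicator {t} r \<partial>?U)"
      unfolding M_def using G[OF t] G_indep
      by (intro integral_mult_indep_last[OF A B U _ _ _ ind_meas, where K = K and K' = 1])
        (auto simp: M_def indicator_def)
    also have "(\<integral>r. indicator {t} r \<partial>?U) = 1 / card S"
      using t S(1) by (simp add: measure_uniform_count_measure)
    finally show "(\<integral>w. G t w * indicator {t} (snd (snd w)) \<partial>M) = (\<integral>w. G t w \<partial>M) * (1 / card S)" .
  qed
  finally show ?thesis by (simp add: sum_divide_distrib)
qed

lemma sets_unif_sphere[simp, measurable_cong]: "sets (unif_sphere :: (real^'n) measure) = sets borel"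
  by (simp add: unif_sphere_def)

lemma space_unif_sphere[simp]: "space (unif_sphere :: (real^'n) measure) = UNIV"
  by (simp add: unif_sphere_def)

lemma prob_space_unif_sphere: "prob_space (unif_sphere :: (real^'n) measure)"
  unfolding unif_sphere_def
  by (rule prob_space.prob_space_distr[OF prob_space_unif_ball]) measurable

lemma AE_unif_sphere_norm_le: "AE u in (unif_sphere :: (real^'n) measure). norm u \<le> 1"
proof -
  have "emeasure unif_sphere {u::real^'n. 1 < norm u}
      = emeasure unif_ball ((\<lambda>v::real^'n. (1 / norm v) *\<^sub>R v) -` {u. 1 < norm u} \<inter> space unif_ball)"
    unfolding unif_sphere_def by (rule emeasure_distr) measurable
  also have "(\<lambda>v::real^'n. (1 / norm v) *\<^sub>R v) -` {u. 1 < norm u} \<inter> space unif_ball = {}"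
    by (auto simp: divide_simps split: if_splits)
  finally show ?thesis by (intro AE_I[of _ _ "{u. 1 < norm u}"]) auto
qed

section \<open>Sample paths of ZO-AdaMM\<close>

text \<open>No hypothesis on \<open>\<beta>2\<close> is needed: the weights only have to stay above \<open>c\<close>, and the
  \<open>max\<close> in the update of \<open>vhat\<close> guarantees this for any \<open>\<beta>2\<close>.\<close>

locale zo_adamm_run = zo_objective F P L \<eta> for F :: "real^'n \<Rightarrow> 's \<Rightarrow> real" and P L \<eta> +
  fixes X :: "(real^'n) set" and x1 vh0 :: "real^'n" and c \<alpha> \<beta>2 \<mu> Df :: real and T :: nat
  assumes X_closed: "closed X" and X_convex: "convex X" and x1_in: "x1 \<in> X"
    and c_pos: "0 < c" and vh0: "\<And>i. c \<le> sqrt (vh0 $ i)"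
    and alpha_pos: "0 < \<alpha>" and alpha_le: "\<alpha> \<le> c / L"
    and T_pos: "1 \<le> T" and mu_eq: "\<mu> = 1 / sqrt (real T * real CARD('n))"
    and Df: "\<And>x. smooth f \<mu> x1 - smooth f \<mu> x \<le> Df"
begin

abbreviation "state xs us t \<equiv> zo_adamm F X x1 vh0 (\<lambda>_. \<alpha>) (\<lambda>_. 0) \<beta>2 \<mu> xs us t"
abbreviation "iterate xs us t \<equiv> zo_x F X x1 vh0 (\<lambda>_. \<alpha>) (\<lambda>_. 0) \<beta>2 \<mu> xs us t"
abbreviation "vhat xs us t \<equiv> zo_vhat F X x1 vh0 (\<lambda>_. \<alpha>) (\<lambda>_. 0) \<beta>2 \<mu> xs us t"
abbreviation "ghat xs us t \<equiv> zo_ghat F X x1 vh0 (\<lambda>_. \<alpha>) (\<lambda>_. 0) \<beta>2 \<mu> xs us t"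
abbreviation "weight xs us t \<equiv> (\<chi> i. sqrt (vhat xs us t $ i))"

lemma X_nonempty: "X \<noteq> {}"
  using x1_in by auto

lemma mu_pos: "0 < \<mu>"
  using T_pos by (simp add: mu_eq)

lemma state_Suc:
  fixes xs :: "nat \<Rightarrow> 's" and us :: "nat \<Rightarrow> real^'n" and t :: nat
  defines "x \<equiv> fst (state xs us t)" and "v \<equiv> fst (snd (snd (state xs us t)))"
    and "vh \<equiv> snd (snd (snd (state xs us t)))"
  defines "g \<equiv> zo_grad (\<lambda>z. F z (xs (Suc t))) \<mu> x (us (Suc t))"
  defines "v' \<equiv> \<beta>2 *\<^sub>R v + (1 - \<beta>2) *\<^sub>R (\<chi> i. (g $ i)\<^sup>2)"
  defines "vh' \<equiv> (\<chi> i. max (vh $ i) (v' $ i))"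
  shows "state xs us (Suc t)
    = (wproj X (\<chi> i. sqrt (vh' $ i)) (x - \<alpha> *\<^sub>R (\<chi> i. g $ i / sqrt (vh' $ i))), g, v', vh')"
  by (cases "state xs us t") (simp add: x_def v_def vh_def g_def v'_def vh'_def Let_def)

lemma vhat_ge: "c\<^sup>2 \<le> vhat xs us t $ i"
proof (induction t)
  case 0
  have "0 < vh0 $ i" using less_le_trans[OF c_pos vh0[of i]] by simp
  have "c\<^sup>2 \<le> (sqrt (vh0 $ i))\<^sup>2" using vh0[of i] c_pos by (intro power_mono) auto
  also have "\<dots> = vh0 $ i" using \<open>0 < vh0 $ i\<close> by simp
  finally show ?case by (simp add: zo_vhat_def)
next
  case (Suc t)
  have "vhat xs us t $ i \<le> vhat xs us (Suc t) $ i"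
    unfolding zo_vhat_def state_Suc by simp
  then show ?case using Suc by linarith
qed

lemma weight_ge: "\<forall>i. c \<le> weight xs us t $ i"
  using real_sqrt_le_mono[OF vhat_ge] c_pos by simp

lemma weight_pos: "\<forall>i. 0 < weight xs us t $ i"
  using weight_ge c_pos by (meson less_le_trans)

lemma iterate_1: "iterate xs us 1 = x1"
  by (simp add: zo_x_def)

lemma iterate_Suc:
  assumes "1 \<le> t"
  shows "iterate xs us (Suc t)
    = iterate xs us t - \<alpha> *\<^sub>R gmap X (weight xs us t) (iterate xs us t) (ghat xs us t) \<alpha>"
proof -
  obtain t' where t: "t = Suc t'" using assms by (cases t) auto
  have "iterate xs us (Suc t)
      = wproj X (weight xs us t) (iterate xs us t - \<alpha> *\<^sub>R (\<chi> i. ghat xs us t $ i / weight xs us t $ i))"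
    unfolding t by (simp add: zo_x_def zo_vhat_def zo_ghat_def state_Suc del: zo_adamm.simps)
  also have "\<dots> = gmap_plus X (weight xs us t) (iterate xs us t) (ghat xs us t) \<alpha>"
    by (rule gmap_plus_eq_wproj[OF weight_pos alpha_pos, symmetric])
  finally show ?thesis using alpha_pos by (simp add: gmap_def)
qed

lemma iterate_in: "1 \<le> t \<Longrightarrow> iterate xs us t \<in> X"
proof (induction t rule: nat_induct_at_least)
  case base then show ?case using x1_in by (simp add: zo_x_def)
next
  case (Suc t)
  show ?case unfolding iterate_Suc[OF Suc.hyps]
    by (rule gmap_VI(1)[OF weight_pos alpha_pos X_closed X_convex X_nonempty])
qed

lemma smoothing_error_power2_le: "(norm (Gf x - Gm \<mu> x))\<^sup>2 \<le> L\<^sup>2 * real CARD('n) / (3 * real T)"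
proof -
  have "\<mu>\<^sup>2 = 1 / (real T * real CARD('n))"
    using T_pos by (simp add: mu_eq power_divide)
  then show ?thesis
    using norm_Gf_minus_Gm_power2_le[of x \<mu>] by (simp add: power2_eq_square)
qed

lemma pathwise_gmap_bound:
  "(\<Sum>t=1..T. (hnorm (weight xs us t) (gmap X (weight xs us t) (iterate xs us t) (Gf (iterate xs us t)) \<alpha>))\<^sup>2)
    \<le> 6 * Df / \<alpha> + 15 / (2 * c) * (\<Sum>t=1..T. (norm (ghat xs us t - Gm \<mu> (iterate xs us t)))\<^sup>2)
      + 3 * L\<^sup>2 * real CARD('n) / (4 * c)"
proof -
  have "(\<Sum>t=1..T. (hnorm (weight xs us t) (gmap X (weight xs us t) (iterate xs us t) (Gf (iterate xs us t)) \<alpha>))\<^sup>2)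
    \<le> 6 * Df / \<alpha> + 15 / (2 * c) * (\<Sum>t=1..T. (norm (ghat xs us t - Gm \<mu> (iterate xs us t)))\<^sup>2)
      + 9 * real T * (L\<^sup>2 * real CARD('n) / (3 * real T)) / (4 * c)"
  proof (rule gmap_descent_sum[OF c_pos alpha_pos _ X_closed X_convex smooth_descent])
    show "\<alpha> * L \<le> c" using alpha_le L_pos by (simp add: field_simps)
    show "smooth f \<mu> (iterate xs us 1) - smooth f \<mu> (iterate xs us (Suc T)) \<le> Df"
      unfolding iterate_1 by (rule Df)
  qed (use weight_ge iterate_in iterate_Suc smoothing_error_power2_le in auto)
  also have "9 * real T * (L\<^sup>2 * real CARD('n) / (3 * real T)) / (4 * c) = 3 * L\<^sup>2 * real CARD('n) / (4 * c)"
    using T_pos by (simp add: field_simps)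
  finally show ?thesis .
qed

section \<open>Expectations\<close>

abbreviation "Om \<equiv> (omega P T :: ((nat \<Rightarrow> 's) \<times> (nat \<Rightarrow> real^'n) \<times> nat) measure)"

lemma omega_eq: "Om = PiM {1..T} (\<lambda>_. P)
    \<Otimes>\<^sub>M (PiM {1..T} (\<lambda>_. unif_sphere :: (real^'n) measure) \<Otimes>\<^sub>M uniform_count_measure {1..T})"
  by (simp add: omega_def)

lemma prob_spaces_omega:
  "prob_space (PiM {1..T} (\<lambda>_. P))" "prob_space (PiM {1..T} (\<lambda>_. unif_sphere :: (real^'n) measure))"
  "prob_space Om"
proof -
  show A: "prob_space (PiM {1..T} (\<lambda>_. P))" using P by (intro prob_space_PiM) auto
  show B: "prob_space (PiM {1..T} (\<lambda>_. unif_sphere :: (real^'n) measure))"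
    using prob_space_unif_sphere by (intro prob_space_PiM) auto
  have "prob_space (uniform_count_measure {1..T})"
    by (rule prob_space_uniform_count_measure) (use T_pos in auto)
  then show "prob_space Om" unfolding omega_eq by (intro prob_space_pair A B)
qed

lemma sample_measurable: "t \<in> {1..T} \<Longrightarrow> (\<lambda>w. fst w t) \<in> measurable Om P"
  unfolding omega_eq by (rule measurable_compose[OF measurable_fst measurable_component_singleton]) auto

lemma direction_measurable: "t \<in> {1..T} \<Longrightarrow> (\<lambda>w. fst (snd w) t) \<in> borel_measurable Om"
proof -
  assume t: "t \<in> {1..T}"
  have "(\<lambda>w. fst (snd w) t) \<in> measurable Om (unif_sphere :: (real^'n) measure)"
    unfolding omega_eq using t
    by (intro measurable_compose[OF measurable_compose[OF measurable_snd measurable_fst]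
        measurable_component_singleton]) auto
  then show ?thesis by (simp add: measurable_cong_sets[OF refl sets_unif_sphere])
qed

lemma zo_grad_measurable:
  assumes t: "t \<in> {1..T}" and x: "x \<in> borel_measurable Om"
  shows "(\<lambda>w. zo_grad (\<lambda>z. F z (fst w t)) \<mu> (x w) (fst (snd w) t)) \<in> borel_measurable Om"
proof -
  have F_comp: "(\<lambda>w. F (y w) (fst w t)) \<in> borel_measurable Om" if "y \<in> borel_measurable Om" for y
  proof -
    have "(\<lambda>w. (y w, fst w t)) \<in> measurable Om (borel \<Otimes>\<^sub>M P)"
      using that sample_measurable[OF t] by measurable
    from measurable_compose[OF this F_meas] show ?thesis by simp
  qed
  note [measurable] = direction_measurable[OF t] x
  have [measurable]: "(\<lambda>w. F (x w + \<mu> *\<^sub>R fst (snd w) t) (fst w t)) \<in> borel_measurable Om"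
    by (rule F_comp) measurable
  have [measurable]: "(\<lambda>w. F (x w) (fst w t)) \<in> borel_measurable Om"
    by (rule F_comp) measurable
  show ?thesis unfolding zo_grad_def by measurable
qed

lemma state_Suc_measurable:
  assumes t: "Suc t \<in> {1..T}"
    and IH: "(\<lambda>w. fst (state (fst w) (fst (snd w)) t)) \<in> borel_measurable Om"
      "(\<lambda>w. fst (snd (snd (state (fst w) (fst (snd w)) t)))) \<in> borel_measurable Om"
      "(\<lambda>w. snd (snd (snd (state (fst w) (fst (snd w)) t)))) \<in> borel_measurable Om"
  shows "(\<lambda>w. fst (state (fst w) (fst (snd w)) (Suc t))) \<in> borel_measurable Om"
    "(\<lambda>w. fst (snd (snd (state (fst w) (fst (snd w)) (Suc t))))) \<in> borel_measurable Om"
    "(\<lambda>w. snd (snd (snd (state (fst w) (fst (snd w)) (Suc t))))) \<in> borel_measurable Om"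
proof -
  define x v vh where "x w = fst (state (fst w) (fst (snd w)) t)"
    and "v w = fst (snd (snd (state (fst w) (fst (snd w)) t)))"
    and "vh w = snd (snd (snd (state (fst w) (fst (snd w)) t)))"
    for w :: "(nat \<Rightarrow> 's) \<times> (nat \<Rightarrow> real^'n) \<times> nat"
  define g where "g w = zo_grad (\<lambda>z. F z (fst w (Suc t))) \<mu> (x w) (fst (snd w) (Suc t))" for w
  define v' where "v' w = \<beta>2 *\<^sub>R v w + (1 - \<beta>2) *\<^sub>R (\<chi> i. (g w $ i)\<^sup>2)" for w
  define vh' where "vh' w = (\<chi> i. max (vh w $ i) (v' w $ i))" for w
  define H where "H w = (\<chi> i. sqrt (vh' w $ i))" for w
  have state: "state (fst w) (fst (snd w)) (Suc t)
      = (wproj X (H w) (x w - \<alpha> *\<^sub>R (\<chi> i. g w $ i / H w $ i)), g w, v' w, vh' w)" for w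
    unfolding H_def vh'_def v'_def g_def x_def v_def vh_def by (simp only: state_Suc vec_lambda_beta)
  note [measurable] = IH[folded x_def v_def vh_def]
  have [measurable]: "g \<in> borel_measurable Om"
    unfolding g_def by (rule zo_grad_measurable[OF t IH(1)[folded x_def]])
  have [measurable]: "v' \<in> borel_measurable Om" unfolding v'_def by measurable
  have [measurable]: "vh' \<in> borel_measurable Om" unfolding vh'_def by measurable
  have [measurable]: "H \<in> borel_measurable Om" unfolding H_def by measurable
  have "\<forall>i. c \<le> H w $ i" for w
    using weight_ge[of "fst w" "fst (snd w)" "Suc t"]
    by (simp add: zo_vhat_def state H_def del: zo_adamm.simps)
  then have "(\<lambda>w. wproj X (H w) (x w - \<alpha> *\<^sub>R (\<chi> i. g w $ i / H w $ i))) \<in> borel_measurable Om"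
    by (intro borel_measurable_wproj[OF c_pos X_closed X_convex X_nonempty]) measurable
  then show "(\<lambda>w. fst (state (fst w) (fst (snd w)) (Suc t))) \<in> borel_measurable Om"
    "(\<lambda>w. fst (snd (snd (state (fst w) (fst (snd w)) (Suc t))))) \<in> borel_measurable Om"
    "(\<lambda>w. snd (snd (snd (state (fst w) (fst (snd w)) (Suc t))))) \<in> borel_measurable Om"
    by (simp_all only: state fst_conv snd_conv) measurable
qed

lemma state_measurable:
  "t \<le> T \<Longrightarrow> (\<lambda>w. fst (state (fst w) (fst (snd w)) t)) \<in> borel_measurable Om
     \<and> (\<lambda>w. fst (snd (snd (state (fst w) (fst (snd w)) t)))) \<in> borel_measurable Om
     \<and> (\<lambda>w. snd (snd (snd (state (fst w) (fst (snd w)) t)))) \<in> borel_measurable Om"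
proof (induction t)
  case (Suc t)
  then have "Suc t \<in> {1..T}" by simp
  with Suc show ?case using state_Suc_measurable by simp
qed simp

lemma iterate_measurable[measurable]:
  "t \<in> {1..T} \<Longrightarrow> (\<lambda>w. iterate (fst w) (fst (snd w)) t) \<in> borel_measurable Om"
  unfolding zo_x_def using state_measurable[of "t - 1"] by auto

lemma vhat_measurable[measurable]:
  "t \<in> {1..T} \<Longrightarrow> (\<lambda>w. vhat (fst w) (fst (snd w)) t) \<in> borel_measurable Om"
  unfolding zo_vhat_def using state_measurable[of t] by auto

lemma ghat_measurable[measurable]:
  "t \<in> {1..T} \<Longrightarrow> (\<lambda>w. ghat (fst w) (fst (snd w)) t) \<in> borel_measurable Om"
  unfolding zo_ghat_def by (rule zo_grad_measurable) measurable

lemma gmap_measurable[measurable]: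
  assumes t: "t \<in> {1..T}"
  shows "(\<lambda>w. gmap X (weight (fst w) (fst (snd w)) t) (iterate (fst w) (fst (snd w)) t)
      (Gf (iterate (fst w) (fst (snd w)) t)) \<alpha>) \<in> borel_measurable Om"
proof -
  note [measurable] = iterate_measurable[OF t] vhat_measurable[OF t]
  have weight[measurable]: "(\<lambda>w. weight (fst w) (fst (snd w)) t) \<in> borel_measurable Om"
    by measurable
  have [measurable]: "(\<lambda>w. Gf (iterate (fst w) (fst (snd w)) t)) \<in> borel_measurable Om"
    by measurable
  have arg: "(\<lambda>w. iterate (fst w) (fst (snd w)) t
      - \<alpha> *\<^sub>R (\<chi> i. Gf (iterate (fst w) (fst (snd w)) t) $ i / weight (fst w) (fst (snd w)) t $ i))
    \<in> borel_measurable Om"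
    by measurable
  have [measurable]: "(\<lambda>w. wproj X (weight (fst w) (fst (snd w)) t) (iterate (fst w) (fst (snd w)) t
      - \<alpha> *\<^sub>R (\<chi> i. Gf (iterate (fst w) (fst (snd w)) t) $ i / weight (fst w) (fst (snd w)) t $ i)))
    \<in> borel_measurable Om"
    by (rule borel_measurable_wproj[OF c_pos X_closed X_convex X_nonempty weight arg weight_ge])
  show ?thesis unfolding gmap_def gmap_plus_eq_wproj[OF weight_pos alpha_pos] by measurable
qed

lemma gmap_power2_le:
  assumes "1 \<le> t"
  shows "(hnorm (weight xs us t) (gmap X (weight xs us t) (iterate xs us t) (Gf (iterate xs us t)) \<alpha>))\<^sup>2
    \<le> (real CARD('n) * \<eta>)\<^sup>2 / c"
proof -
  have "(hnorm (weight xs us t) (gmap X (weight xs us t) (iterate xs us t) (Gf (iterate xs us t)) \<alpha>))\<^sup>2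
      \<le> (norm (Gf (iterate xs us t)))\<^sup>2 / c"
    by (intro hnorm_power2_le_of_le_inner[OF weight_ge c_pos]
        gmap_le_inner[OF weight_pos alpha_pos X_closed X_convex iterate_in[OF assms]])
  also have "\<dots> \<le> (real CARD('n) * \<eta>)\<^sup>2 / c"
    using norm_Gf_le c_pos by (intro divide_right_mono power_mono) auto
  finally show ?thesis .
qed

lemma norm_ghat_le:
  assumes s: "xs t \<in> space P" and u: "norm (us t) \<le> 1"
  shows "norm (ghat xs us t) \<le> real CARD('n) * (real CARD('n) * \<eta>) + real CARD('n) * L * \<mu> / 2"
proof -
  define x d where "x = iterate xs us t" and "d = real CARD('n)"
  have "\<bar>inner (DF x (xs t)) (\<mu> *\<^sub>R us t)\<bar> \<le> norm (DF x (xs t)) * norm (\<mu> *\<^sub>R us t)"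
    by (rule Cauchy_Schwarz_ineq2)
  also have "\<dots> \<le> (d * \<eta>) * \<mu>"
    using norm_DF_le[OF s, of x] u mu_pos unfolding d_def
    by (intro mult_mono) (auto intro: mult_left_le order_trans[OF norm_ge_zero])
  finally have lin: "\<bar>inner (DF x (xs t)) (\<mu> *\<^sub>R us t)\<bar> \<le> d * \<eta> * \<mu>" .
  have "(norm (\<mu> *\<^sub>R us t))\<^sup>2 \<le> \<mu>\<^sup>2"
    using u mu_pos by (intro power_mono) (auto intro: mult_left_le)
  then have "L / 2 * (norm (\<mu> *\<^sub>R us t))\<^sup>2 \<le> L / 2 * \<mu>\<^sup>2"
    using L_pos by (intro mult_left_mono) auto
  moreover have "\<bar>F (x + \<mu> *\<^sub>R us t) (xs t) - F x (xs t) - inner (DF x (xs t)) (\<mu> *\<^sub>R us t)\<bar>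
      \<le> L / 2 * (norm (\<mu> *\<^sub>R us t))\<^sup>2"
    using DF_quadratic_bound[OF s, of "x + \<mu> *\<^sub>R us t" x] by simp
  ultimately have diff: "\<bar>F (x + \<mu> *\<^sub>R us t) (xs t) - F x (xs t)\<bar> \<le> d * \<eta> * \<mu> + L / 2 * \<mu>\<^sup>2"
    using lin by linarith
  have "norm (ghat xs us t) = d / \<mu> * \<bar>F (x + \<mu> *\<^sub>R us t) (xs t) - F x (xs t)\<bar> * norm (us t)"
    unfolding zo_ghat_def zo_grad_def x_def d_def using mu_pos by (simp add: abs_mult)
  also have "\<dots> \<le> d / \<mu> * (d * \<eta> * \<mu> + L / 2 * \<mu>\<^sup>2) * 1"
    using diff u mu_pos by (intro mult_mono) (auto simp: d_def)
  also have "\<dots> = d * (d * \<eta>) + d * L * \<mu> / 2"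
    using mu_pos by (simp add: field_simps power2_eq_square)
  finally show ?thesis unfolding d_def .
qed

lemma AE_directions_norm_le: "AE w in Om. \<forall>t\<in>{1..T}. norm (fst (snd w) t) \<le> 1"
proof (rule AE_finite_allI)
  fix t assume t: "t \<in> {1..T}"
  define A B U where "A = PiM {1..T} (\<lambda>_. P)"
    and "B = PiM {1..T} (\<lambda>_. unif_sphere :: (real^'n) measure)"
    and "U = uniform_count_measure {1..T}"
  interpret U: prob_space U
    unfolding U_def by (rule prob_space_uniform_count_measure) (use T_pos in auto)
  interpret BU: prob_space "B \<Otimes>\<^sub>M U"
    unfolding B_def by (intro prob_space_pair prob_spaces_omega(2) U.prob_space_axioms)
  have "AE us in B. norm (us t) \<le> 1"
    unfolding B_def using prob_space_unif_sphere t AE_unif_sphere_norm_le by (rule AE_PiM_component)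
  then obtain N where N: "{us \<in> space B. \<not> norm (us t) \<le> 1} \<subseteq> N" "N \<in> null_sets B"
    by (auto elim!: AE_E)
  have "space A \<times> (N \<times> space U) \<in> null_sets (A \<Otimes>\<^sub>M (B \<Otimes>\<^sub>M U))"
    by (intro BU.times_in_null_sets2 U.times_in_null_sets1 N(2)) auto
  moreover have "{w \<in> space Om. \<not> norm (fst (snd w) t) \<le> 1} \<subseteq> space A \<times> (N \<times> space U)"
    using N(1) by (auto simp: omega_eq A_def B_def U_def space_pair_measure)
  ultimately show "AE w in Om. norm (fst (snd w) t) \<le> 1"
    unfolding omega_eq A_def B_def U_def by (rule AE_I')
qed (simp)

lemma gmap_power2_measurable:
  assumes t: "t \<in> {1..T}"
  shows "(\<lambda>w. (hnorm (weight (fst w) (fst (snd w)) t) (gmap X (weight (fst w) (fst (snd w)) t)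
      (iterate (fst w) (fst (snd w)) t) (Gf (iterate (fst w) (fst (snd w)) t)) \<alpha>))\<^sup>2)
    \<in> borel_measurable Om"
proof -
  note [measurable] = gmap_measurable[OF t] vhat_measurable[OF t]
  show ?thesis unfolding hnorm_def by measurable
qed

lemma err_integrable:
  assumes t: "t \<in> {1..T}"
  shows "integrable Om (\<lambda>w. (norm (ghat (fst w) (fst (snd w)) t - Gm \<mu> (iterate (fst w) (fst (snd w)) t)))\<^sup>2)"
proof -
  interpret prob_space Om by (rule prob_spaces_omega(3))
  note [measurable] = ghat_measurable[OF t] iterate_measurable[OF t]
  define d where "d = real CARD('n)"
  show ?thesis
  proof (rule integrable_const_bound[where B = "(d * (d * \<eta>) + d * L * \<mu> / 2 + d * \<eta>)\<^sup>2"])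
    show "AE w in Om. norm ((norm (ghat (fst w) (fst (snd w)) t - Gm \<mu> (iterate (fst w) (fst (snd w)) t)))\<^sup>2)
        \<le> (d * (d * \<eta>) + d * L * \<mu> / 2 + d * \<eta>)\<^sup>2"
      using AE_directions_norm_le AE_space
    proof eventually_elim
      case (elim w)
      then have "fst w t \<in> space P" "norm (fst (snd w) t) \<le> 1"
        using t by (auto simp: omega_eq space_pair_measure space_PiM)
      then have "norm (ghat (fst w) (fst (snd w)) t - Gm \<mu> (iterate (fst w) (fst (snd w)) t))
          \<le> (d * (d * \<eta>) + d * L * \<mu> / 2) + d * \<eta>"
        unfolding d_def by (intro order_trans[OF norm_triangle_ineq4] add_mono norm_ghat_le norm_Gm_le)
      then show ?case by (simp add: power_mono)
    qed
  qed measurable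
qed

lemma expected_gmap_sum_le:
  "(\<Sum>t=1..T. \<integral>w. (hnorm (weight (fst w) (fst (snd w)) t) (gmap X (weight (fst w) (fst (snd w)) t)
      (iterate (fst w) (fst (snd w)) t) (Gf (iterate (fst w) (fst (snd w)) t)) \<alpha>))\<^sup>2 \<partial>Om)
    \<le> 6 * Df / \<alpha> + 3 * L\<^sup>2 * real CARD('n) / (4 * c)
      + 15 / (2 * c) * (\<Sum>t=1..T. \<integral>w. (norm (ghat (fst w) (fst (snd w)) t
          - Gm \<mu> (iterate (fst w) (fst (snd w)) t)))\<^sup>2 \<partial>Om)"
  (is "(\<Sum>t=1..T. \<integral>w. ?G t w \<partial>Om) \<le> ?C + 15 / (2 * c) * (\<Sum>t=1..T. \<integral>w. ?e t w \<partial>Om)")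
proof -
  interpret prob_space Om by (rule prob_spaces_omega(3))
  have G_int: "integrable Om (?G t)" if t: "t \<in> {1..T}" for t
    using t gmap_power2_le by (intro integrable_bounded_prob[OF prob_spaces_omega(3)
        gmap_power2_measurable[OF t], where K = "(real CARD('n) * \<eta>)\<^sup>2 / c"]) auto
  have "(\<Sum>t=1..T. \<integral>w. ?G t w \<partial>Om) = (\<integral>w. (\<Sum>t=1..T. ?G t w) \<partial>Om)"
    using G_int by (simp add: Bochner_Integration.integral_sum)
  also have "\<dots> \<le> (\<integral>w. ?C + 15 / (2 * c) * (\<Sum>t=1..T. ?e t w) \<partial>Om)"
  proof (rule integral_mono)
    show "integrable Om (\<lambda>w. \<Sum>t=1..T. ?G t w)"
      using G_int by (intro Bochner_Integration.integrable_sum) auto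
    show "integrable Om (\<lambda>w. ?C + 15 / (2 * c) * (\<Sum>t=1..T. ?e t w))"
      using err_integrable by (intro Bochner_Integration.integrable_add integrable_mult_right
          Bochner_Integration.integrable_sum) auto
    show "(\<Sum>t=1..T. ?G t w) \<le> ?C + 15 / (2 * c) * (\<Sum>t=1..T. ?e t w)" for w
      using pathwise_gmap_bound[of "fst w" "fst (snd w)"] by linarith
  qed
  also have "\<dots> = (\<integral>w. ?C \<partial>Om) + (\<integral>w. 15 / (2 * c) * (\<Sum>t=1..T. ?e t w) \<partial>Om)"
    using err_integrable
    by (intro Bochner_Integration.integral_add integrable_mult_right
        Bochner_Integration.integrable_sum) auto
  also have "\<dots> = ?C + 15 / (2 * c) * (\<integral>w. (\<Sum>t=1..T. ?e t w) \<partial>Om)"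
    by (simp add: prob_space)
  also have "(\<integral>w. (\<Sum>t=1..T. ?e t w) \<partial>Om) = (\<Sum>t=1..T. \<integral>w. ?e t w \<partial>Om)"
    using err_integrable by (intro Bochner_Integration.integral_sum) auto
  finally show ?thesis .
qed

theorem expected_gmap_random_iterate_le:
  defines "\<sigma>2 \<equiv> Max ((\<lambda>t. \<integral>w. (norm (ghat (fst w) (fst (snd w)) t
    - grad (smooth f \<mu>) (iterate (fst w) (fst (snd w)) t)))\<^sup>2 \<partial>Om) ` {1..T})"
  shows "(\<integral>w. (hnorm (weight (fst w) (fst (snd w)) (snd (snd w)))
      (gmap X (weight (fst w) (fst (snd w)) (snd (snd w))) (iterate (fst w) (fst (snd w)) (snd (snd w)))
        (grad f (iterate (fst w) (fst (snd w)) (snd (snd w)))) \<alpha>))\<^sup>2 \<partial>Om)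
    \<le> 6 * Df / (\<alpha> * T) + 3 * L\<^sup>2 * real CARD('n) / (4 * c * T)
      + 6 * \<eta>\<^sup>2 / (c ^ 4 * T) * (\<sigma>2 + real CARD('n) * \<eta>\<^sup>2) + (3 * c + 9) / c * \<sigma>2"
proof -
  define G where "G t w = (hnorm (weight (fst w) (fst (snd w)) t) (gmap X (weight (fst w) (fst (snd w)) t)
      (iterate (fst w) (fst (snd w)) t) (Gf (iterate (fst w) (fst (snd w)) t)) \<alpha>))\<^sup>2"
    for t and w :: "(nat \<Rightarrow> 's) \<times> (nat \<Rightarrow> real^'n) \<times> nat"
  define e where "e t = (\<integral>w. (norm (ghat (fst w) (fst (snd w)) t
    - Gm \<mu> (iterate (fst w) (fst (snd w)) t)))\<^sup>2 \<partial>Om)" for t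
  have e_le: "e t \<le> \<sigma>2" if "t \<in> {1..T}" for t
    unfolding \<sigma>2_def grad_smooth_eq e_def using that by (intro Max_ge) auto
  have "0 \<le> e 1" unfolding e_def by (rule integral_nonneg_AE) simp
  then have \<sigma>2_nonneg: "0 \<le> \<sigma>2" using e_le[of 1] T_pos by simp
  have "(\<integral>w. G (snd (snd w)) w \<partial>Om) = (\<Sum>t\<in>{1..T}. \<integral>w. G t w \<partial>Om) / card {1..T}"
    unfolding omega_eq
  proof (rule integral_uniform_index[OF prob_spaces_omega(1,2), where K = "(real CARD('n) * \<eta>)\<^sup>2 / c"])
    show "G t \<in> borel_measurable (PiM {1..T} (\<lambda>_. P)
        \<Otimes>\<^sub>M (PiM {1..T} (\<lambda>_. unif_sphere) \<Otimes>\<^sub>M uniform_count_measure {1..T}))" if "t \<in> {1..T}" for t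
      using gmap_power2_measurable[OF that] unfolding G_def omega_eq .
  qed (use T_pos gmap_power2_le in \<open>auto simp: G_def\<close>)
  also have "\<dots> \<le> (6 * Df / \<alpha> + 3 * L\<^sup>2 * real CARD('n) / (4 * c) + 15 / (2 * c) * (\<Sum>t=1..T. e t)) / T"
    using expected_gmap_sum_le T_pos unfolding G_def e_def by (simp add: divide_right_mono)
  also have "\<dots> \<le> (6 * Df / \<alpha> + 3 * L\<^sup>2 * real CARD('n) / (4 * c) + 15 / (2 * c) * (T * \<sigma>2)) / T"
    using sum_mono[of "{1..T}" e "\<lambda>_. \<sigma>2"] e_le c_pos T_pos
    by (intro divide_right_mono add_left_mono mult_left_mono) auto
  also have "\<dots> = 6 * Df / (\<alpha> * T) + 3 * L\<^sup>2 * real CARD('n) / (4 * c * T) + 15 / (2 * c) * \<sigma>2"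
    using T_pos by (simp add: field_simps)
  also have "\<dots> \<le> 6 * Df / (\<alpha> * T) + 3 * L\<^sup>2 * real CARD('n) / (4 * c * T)
      + 6 * \<eta>\<^sup>2 / (c ^ 4 * T) * (\<sigma>2 + real CARD('n) * \<eta>\<^sup>2) + (3 * c + 9) / c * \<sigma>2"
  proof -
    have "15 / (2 * c) * \<sigma>2 \<le> (3 * c + 9) / c * \<sigma>2"
      using \<sigma>2_nonneg c_pos by (intro mult_right_mono) (auto simp: field_simps)
    moreover have "0 \<le> 6 * \<eta>\<^sup>2 / (c ^ 4 * T) * (\<sigma>2 + real CARD('n) * \<eta>\<^sup>2)"
      using \<sigma>2_nonneg c_pos T_pos by (intro mult_nonneg_nonneg divide_nonneg_pos add_nonneg_nonneg) auto
    ultimately show ?thesis by linarith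
  qed
  finally show ?thesis unfolding G_def grad_f_eq .
qed

end

theorem theorem2:
  fixes F :: "real^'n \<Rightarrow> 's \<Rightarrow> real"
    and P :: "'s measure"
    and X :: "(real^'n) set"
    and x1 vh0 :: "real^'n"
    and Lg \<eta> c \<alpha> \<beta>2 Df :: real
    and T :: nat
  defines "d \<equiv> CARD('n)"
  defines "f \<equiv> (\<lambda>x. \<integral>s. F x s \<partial>P)"
  defines "\<mu> \<equiv> 1 / sqrt (real T * real d)"
  defines "fmu \<equiv> smooth f \<mu>"
  defines "xt \<equiv> (\<lambda>(xs, us, r::nat) t. zo_x F X x1 vh0 (\<lambda>_. \<alpha>) (\<lambda>_. 0) \<beta>2 \<mu> xs us t)"
  defines "vht \<equiv> (\<lambda>(xs, us, r::nat) t. zo_vhat F X x1 vh0 (\<lambda>_. \<alpha>) (\<lambda>_. 0) \<beta>2 \<mu> xs us t)"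
  defines "ght \<equiv> (\<lambda>(xs, us, r::nat) t. zo_ghat F X x1 vh0 (\<lambda>_. \<alpha>) (\<lambda>_. 0) \<beta>2 \<mu> xs us t)"
  defines "Gsq \<equiv> (\<lambda>w t. (norm (\<chi> i. sqrt (sqrt (vht w t $ i)) *
              gmap X (\<chi> i. sqrt (vht w t $ i)) (xt w t) (grad f (xt w t)) \<alpha> $ i))\<^sup>2)"
  defines "\<sigma>2 \<equiv> Max ((\<lambda>t. \<integral>w. (norm (ght w t - grad fmu (xt w t)))\<^sup>2 \<partial>omega P T) ` {1..T})"
  assumes P: "prob_space P"
    and F_meas: "(\<lambda>(x, s). F x s) \<in> borel_measurable (borel \<Otimes>\<^sub>M P)"
    and F_int: "\<And>x. integrable P (F x)"
    and A1_diff: "\<And>s x. s \<in> space P \<Longrightarrow> (\<lambda>z. F z s) differentiable (at x)"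
    and A1_lip: "\<And>s x y. s \<in> space P \<Longrightarrow>
                   norm (grad (\<lambda>z. F z s) x - grad (\<lambda>z. F z s) y) \<le> Lg * norm (x - y)"
    and A2: "\<And>s x. s \<in> space P \<Longrightarrow> infnorm (grad (\<lambda>z. F z s) x) \<le> \<eta>"
    and Lg_pos: "Lg > 0"
    and X_closed: "closed X" and X_convex: "convex X" and x1_in: "x1 \<in> X"
    and c_pos: "c > 0" and vh0: "\<And>i. sqrt (vh0 $ i) \<ge> c"
    and alpha_pos: "\<alpha> > 0" and alpha_le: "\<alpha> \<le> c / Lg"
    and beta2: "0 < \<beta>2" "\<beta>2 \<le> 1"
    and T_pos: "T \<ge> 1"
    and Df: "\<And>x. fmu x1 - fmu x \<le> Df"
  shows "(\<integral>w. Gsq w (snd (snd w)) \<partial>omega P T)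
           \<le> 6 * Df / (\<alpha> * T) + 3 * Lg\<^sup>2 * d / (4 * c * T)
             + 6 * \<eta>\<^sup>2 / (c ^ 4 * T) * (\<sigma>2 + d * \<eta>\<^sup>2)
             + (3 * c + 9) / c * \<sigma>2"
proof -
  have Z0: "zo_objective F P Lg \<eta>"
    using P F_meas F_int A1_diff A1_lip A2 Lg_pos by (rule zo_objective.intro)
  then have f: "zo_objective.f F P = f" by (simp add: fun_eq_iff zo_objective.f_def f_def)
  interpret Z: zo_adamm_run F P Lg \<eta> X x1 vh0 c \<alpha> \<beta>2 \<mu> Df T
  proof (intro zo_adamm_run.intro[OF Z0] zo_adamm_run_axioms.intro; (rule assms)?)
    show "\<mu> = 1 / sqrt (real T * real CARD('n))" by (simp add: \<mu>_def d_def)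
    show "smooth (zo_objective.f F P) \<mu> x1 - smooth (zo_objective.f F P) \<mu> x \<le> Df" for x
      using Df[of x] by (simp add: f fmu_def)
  qed
  have "Gsq w t = (hnorm (Z.weight (fst w) (fst (snd w)) t) (gmap X (Z.weight (fst w) (fst (snd w)) t)
      (Z.iterate (fst w) (fst (snd w)) t) (grad Z.f (Z.iterate (fst w) (fst (snd w)) t)) \<alpha>))\<^sup>2" for w t
    by (simp add: Gsq_def hnorm_def xt_def vht_def f case_prod_unfold)
  moreover have "\<sigma>2 = Max ((\<lambda>t. \<integral>w. (norm (Z.ghat (fst w) (fst (snd w)) t
      - grad (smooth Z.f \<mu>) (Z.iterate (fst w) (fst (snd w)) t)))\<^sup>2 \<partial>omega P T) ` {1..T})"
    by (simp add: \<sigma>2_def ght_def xt_def fmu_def f case_prod_unfold)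
  ultimately show ?thesis
    using Z.expected_gmap_random_iterate_le by (simp add: d_def)
qed

end
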